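(* Fix a centrally symmetric polygon $Q$ and the map $\eta^B$ from $B_n$ to centrally symmetric triangulations of $Q$ as described below. Then the fibers of $\eta^B$ are exactly the congruence classes of a lattice congruence of the weak order on $B_n$.
   Context: $B_n$ is the group of signed permutations: permutations $x$ of $\pm[n]=\{\pm1,\dots,\pm n\}$ with $x(-i)=-x(i)$; the full notation of $x$ is the sequence $x_{-n},\dots,x_{-1},x_1,\dots,x_n$ with $x_i=x(i)$. Its Coxeter generators are $s_0=(-1\ 1)$ and $s_i=(i\ i{+}1)(-i{-}1\ {-i})$ for $i\in[n-1]$. The weak order is $v\le w$ iff $I(v)\subseteq I(w)$, where $I(w)$ is the set of reflections $t$ with $\ell(tw)<\ell(w)$; it is a lattice. Let $Q$ be a convex $(2n+2)$-gon in $\mathbb R^2$ with vertices $v_i$, $i\in\{\pm1,\dots,\pm(n+1)\}$, symmetric under $v\mapsto -v$ with $v_{-i}=-v_i$, whose $x$-coordinates strictly increase in the order $-n-1<\dots<-1<1<\dots<n+1$, with $v_{\pm(n+1)}$ on the $x$-axis; call $i$ up if $v_i$ has positive $y$-coordinate and down otherwise (so $i$ is up iff $-i$ is down). For a signed permutation $x$ list its full notation as $y_1,\dots,y_{2n}$; define paths $\lambda_0,\dots,\lambda_{2n}$ from $v_{-n-1}$ to $v_{n+1}$ visiting vertices in increasing order of index: $\lambda_0$ visits $v_{-n-1}$, all down vertices, and $v_{n+1}$; $\lambda_k$ is $\lambda_{k-1}$ with $v_{y_k}$ deleted if $y_k$ is down and added if $y_k$ is up. $\eta^B(x)$ is the set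 of diagonals (segments between non-adjacent vertices) of $Q$ appearing as edges of some $\lambda_k$; it is a centrally symmetric triangulation of $Q$. *)

theory Defs
  imports "HOL-Analysis.Analysis" "HOL-Combinatorics.Permutations"
begin

definition pm_set :: "nat \<Rightarrow> int set" where
  "pm_set n = {i. 1 \<le> \<bar>i\<bar> \<and> \<bar>i\<bar> \<le> int n}"

definition signed_perms :: "nat \<Rightarrow> (int \<Rightarrow> int) set" where
  "signed_perms n = {x. x permutes pm_set n \<and> (\<forall>i. x (- i) = - x i)}"

definition cox_gen :: "nat \<Rightarrow> int \<Rightarrow> int" where
  "cox_gen i = (if i = 0 then (\<lambda>k. if k = 1 then -1 else if k = -1 then 1 else k)
     else (\<lambda>k. if k = int i then int i + 1 else if k = int i + 1 then int i
           else if k = - int i then - int i - 1 else if k = - int i - 1 then - int i else k))"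

definition cox_len :: "nat \<Rightarrow> (int \<Rightarrow> int) \<Rightarrow> nat" where
  "cox_len n w = (LEAST k. \<exists>ws. length ws = k \<and> set ws \<subseteq> {..<n} \<and>
                      foldr (\<circ>) (map cox_gen ws) id = w)"

definition reflections :: "nat \<Rightarrow> (int \<Rightarrow> int) set" where
  "reflections n = {w \<circ> cox_gen i \<circ> inv w | w i. w \<in> signed_perms n \<and> i < n}"

definition inv_set :: "nat \<Rightarrow> (int \<Rightarrow> int) \<Rightarrow> (int \<Rightarrow> int) set" where
  "inv_set n w = {t \<in> reflections n. cox_len n (t \<circ> w) < cox_len n w}"

definition weak_le :: "nat \<Rightarrow> (int \<Rightarrow> int) \<Rightarrow> (int \<Rightarrow> int) \<Rightarrow> bool" where
  "weak_le n v w \<longleftrightarrow> inv_set n v \<subseteq> inv_set n w"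

definition is_meet :: "'a set \<Rightarrow> ('a \<Rightarrow> 'a \<Rightarrow> bool) \<Rightarrow> 'a \<Rightarrow> 'a \<Rightarrow> 'a \<Rightarrow> bool" where
  "is_meet A le x y m \<longleftrightarrow> m \<in> A \<and> le m x \<and> le m y \<and>
     (\<forall>z\<in>A. le z x \<and> le z y \<longrightarrow> le z m)"

definition is_join :: "'a set \<Rightarrow> ('a \<Rightarrow> 'a \<Rightarrow> bool) \<Rightarrow> 'a \<Rightarrow> 'a \<Rightarrow> 'a \<Rightarrow> bool" where
  "is_join A le x y m \<longleftrightarrow> m \<in> A \<and> le x m \<and> le y m \<and>
     (\<forall>z\<in>A. le x z \<and> le y z \<longrightarrow> le m z)"

definition lattice_congruence :: "'a set \<Rightarrow> ('a \<Rightarrow> 'a \<Rightarrow> bool) \<Rightarrow> ('a \<times> 'a) set \<Rightarrow> bool" where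
  "lattice_congruence A le \<Theta> \<longleftrightarrow> equiv A \<Theta> \<and>
     (\<forall>x y z m1 m2. (x, y) \<in> \<Theta> \<and> z \<in> A \<and> is_meet A le x z m1 \<and> is_meet A le y z m2
        \<longrightarrow> (m1, m2) \<in> \<Theta>) \<and>
     (\<forall>x y z m1 m2. (x, y) \<in> \<Theta> \<and> z \<in> A \<and> is_join A le x z m1 \<and> is_join A le y z m2
        \<longrightarrow> (m1, m2) \<in> \<Theta>)"

definition cross3 :: "real \<times> real \<Rightarrow> real \<times> real \<Rightarrow> real \<times> real \<Rightarrow> real" where
  "cross3 a b c = (fst b - fst a) * (snd c - snd a) - (snd b - snd a) * (fst c - fst a)"

text \<open>Vertices of Q are v i for i in \<plusminus>[n+1].\<close>
definition sym_polygon :: "nat \<Rightarrow> (int \<Rightarrow> real \<times> real) \<Rightarrow> bool" where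
  "sym_polygon n v \<longleftrightarrow>
     (\<forall>i\<in>pm_set (Suc n). v i \<notin> convex hull (v ` (pm_set (Suc n) - {i}))) \<and>
     (\<forall>i\<in>pm_set (Suc n). v (- i) = - v i) \<and>
     (\<forall>i\<in>pm_set (Suc n). \<forall>j\<in>pm_set (Suc n). i < j \<longrightarrow> fst (v i) < fst (v j)) \<and>
     snd (v (int n + 1)) = 0"

definition poly_edge :: "nat \<Rightarrow> (int \<Rightarrow> real \<times> real) \<Rightarrow> int \<Rightarrow> int \<Rightarrow> bool" where
  "poly_edge n v i j \<longleftrightarrow> i \<in> pm_set (Suc n) \<and> j \<in> pm_set (Suc n) \<and> i \<noteq> j \<and>
     ((\<forall>k \<in> pm_set (Suc n) - {i, j}. cross3 (v i) (v j) (v k) > 0) \<or>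
      (\<forall>k \<in> pm_set (Suc n) - {i, j}. cross3 (v i) (v j) (v k) < 0))"

definition is_diagonal :: "nat \<Rightarrow> (int \<Rightarrow> real \<times> real) \<Rightarrow> int set \<Rightarrow> bool" where
  "is_diagonal n v d \<longleftrightarrow> (\<exists>i j. d = {i, j} \<and> i \<in> pm_set (Suc n) \<and> j \<in> pm_set (Suc n) \<and>
      i \<noteq> j \<and> \<not> poly_edge n v i j)"

definition is_up :: "(int \<Rightarrow> real \<times> real) \<Rightarrow> int \<Rightarrow> bool" where
  "is_up v i \<longleftrightarrow> snd (v i) > 0"

text \<open>Full notation x_{-n},...,x_{-1},x_1,...,x_n as the list y_1..y_{2n} (0-indexed).\<close>
definition full_notation :: "nat \<Rightarrow> (int \<Rightarrow> int) \<Rightarrow> int list" where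
  "full_notation n x = map x ([- int n .. -1] @ [1 .. int n])"

text \<open>A path visiting vertices in increasing index order is given by its vertex set.\<close>
primrec lam_path :: "nat \<Rightarrow> (int \<Rightarrow> real \<times> real) \<Rightarrow> (int \<Rightarrow> int) \<Rightarrow> nat \<Rightarrow> int set" where
  "lam_path n v x 0 = {- int n - 1, int n + 1} \<union> {i \<in> pm_set n. \<not> is_up v i}"
| "lam_path n v x (Suc k) =
     (let y = full_notation n x ! k in
      if is_up v y then insert y (lam_path n v x k) else lam_path n v x k - {y})"

definition path_edges :: "int set \<Rightarrow> int set set" where
  "path_edges S = {{i, j} | i j. i \<in> S \<and> j \<in> S \<and> i < j \<and> (\<forall>k\<in>S. \<not> (i < k \<and> k < j))}"

definition etaB :: "nat \<Rightarrow> (int \<Rightarrow> real \<times> real) \<Rightarrow> (int \<Rightarrow> int) \<Rightarrow> int set set" where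
  "etaB n v x = {d. is_diagonal n v d \<and> (\<exists>k \<le> 2 * n. d \<in> path_edges (lam_path n v x k))}"

end

theory Submission
  imports Defs
begin

text \<open>A signed permutation is handled through its inversion set: the pairs of values \<open>a < b\<close> of
  \<open>\<plusminus>[n]\<close> that occur in decreasing order in its full notation. The weak order is inclusion of
  inversion sets, and the inversion set of a join \<open>x \<or> z\<close> is the transitive closure of the union of
  those of \<open>x\<close> and \<open>z\<close>.

  The path \<open>\<lambda>\<^sub>k\<close> consists of the two axis vertices, the down vertices whose value is not among the
  first \<open>k\<close> entries of the full notation and the up vertices whose value is. Hence a diagonal \<open>{i, j}\<close>
  lies in \<open>\<eta>\<^sup>B(x)\<close> iff every value of its early set (down vertices strictly between \<open>i\<close> and \<open>j\<close>,
  up endpoints) precedes every value of its late set (up vertices strictly between, down endpoints)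
  in \<open>x\<close>, a condition on the inversion set of \<open>x\<close>.

  If \<open>x\<close> and \<open>y\<close> have the same diagonals, walk from \<open>x\<close> to \<open>y\<close> by simple generators. Each step
  flips a pair \<open>(a, c)\<close> of values in adjacent positions, and since no diagonal separates \<open>x\<close> from \<open>y\<close>
  there is a value \<open>b\<close> between \<open>a\<close> and \<open>c\<close> whose order relative to \<open>a\<close> and \<open>c\<close> shows that adding
  \<open>(a, c)\<close> and its mirror \<open>(-c, -a)\<close> to a transitively closed set changes no edge condition. So
  joins with a fixed \<open>z\<close> keep the fibre; meets reduce to joins through \<open>x \<mapsto> x w\<^sub>0\<close>, which reverses
  the weak order and exchanges up and down. The geometry of \<open>Q\<close> is only needed to see that
  \<open>{i, j}\<close> is a diagonal whenever its early and late sets are both nonempty: then vertices of \<open>Q\<close>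
  lie strictly on both sides of the line through \<open>v\<^sub>i\<close> and \<open>v\<^sub>j\<close>.\<close>

lemma mem_pm_set_iff: "i \<in> pm_set n \<longleftrightarrow> i \<noteq> 0 \<and> - int n \<le> i \<and> i \<le> int n"
  by (auto simp: pm_set_def)

lemma finite_pm_set: "finite (pm_set n)"
proof -
  have "pm_set n \<subseteq> {- int n..int n}" by (auto simp: mem_pm_set_iff)
  then show ?thesis by (rule finite_subset) simp
qed

lemma involution_permutes:
  assumes "\<And>k. f (f k) = k" and "\<And>k. k \<notin> S \<Longrightarrow> f k = k"
  shows "f permutes S"
  unfolding permutes_def
proof (intro conjI allI impI)
  fix y show "\<exists>!x. f x = y"
    by (rule ex1I[of _ "f y"]) (use assms in metis)+
qed (use assms in auto)

context fixes n :: nat and x :: "int \<Rightarrow> int"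
  assumes sp: "x \<in> signed_perms n"
begin

lemma signed_perm_permutes: "x permutes pm_set n" using sp by (simp add: signed_perms_def)
lemma signed_perm_odd: "x (- i) = - x i" using sp by (simp add: signed_perms_def)
lemma signed_perm_in_iff: "x i \<in> pm_set n \<longleftrightarrow> i \<in> pm_set n" using signed_perm_permutes by (rule permutes_in_image)
lemma signed_perm_fixes: "i \<notin> pm_set n \<Longrightarrow> x i = i" using signed_perm_permutes by (rule permutes_not_in)
lemma signed_perm_inv_apply: "inv x (x i) = i" using signed_perm_permutes by (rule permutes_inverses)
lemma signed_perm_apply_inv: "x (inv x i) = i" using signed_perm_permutes by (rule permutes_inverses)
lemma signed_perm_eq_iff: "x i = x j \<longleftrightarrow> i = j" by (metis signed_perm_inv_apply)
lemma inv_signed_perm: "inv x \<in> signed_perms n"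
proof -
  have "inv x (- i) = - inv x i" for i
    by (metis signed_perm_inv_apply signed_perm_apply_inv signed_perm_odd)
  then show ?thesis using permutes_inv[OF signed_perm_permutes] by (simp add: signed_perms_def)
qed

end

lemma comp_signed_perm: "x \<in> signed_perms n \<Longrightarrow> y \<in> signed_perms n \<Longrightarrow> x \<circ> y \<in> signed_perms n"
  by (simp add: signed_perms_def permutes_compose)

lemma id_signed_perm: "id \<in> signed_perms n"
  by (simp add: signed_perms_def permutes_id)

lemma cox_gen_invol: "cox_gen i (cox_gen i k) = k"
  by (auto simp: cox_gen_def)

lemma cox_gen_signed_perm: "i < n \<Longrightarrow> cox_gen i \<in> signed_perms n"
  unfolding signed_perms_def
  by (auto intro!: involution_permutes cox_gen_invol simp: cox_gen_def mem_pm_set_iff)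

lemma inv_cox_gen: "inv (cox_gen i) = cox_gen i"
  by (rule inv_unique_comp) (auto simp: fun_eq_iff cox_gen_invol)

definition stransp :: "int \<Rightarrow> int \<Rightarrow> int \<Rightarrow> int" where
  "stransp a b k = (if k = a then b else if k = b then a else if k = - a then - b
     else if k = - b then - a else k)"

lemma stransp_invol: "a \<noteq> 0 \<Longrightarrow> b \<noteq> 0 \<Longrightarrow> stransp a b (stransp a b k) = k"
  by (auto simp: stransp_def)

lemma stransp_signed_perm: "a \<in> pm_set n \<Longrightarrow> b \<in> pm_set n \<Longrightarrow> stransp a b \<in> signed_perms n"
  unfolding signed_perms_def
  by (auto intro!: involution_permutes stransp_invol simp: stransp_def mem_pm_set_iff)

lemma stransp_commute: "stransp a b = stransp b a"
  by (auto simp: stransp_def fun_eq_iff)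

section \<open>Inversion sets\<close>

text \<open>Inversions are pairs of values, not of positions; they come in mirror pairs \<open>(a, b)\<close>,
  \<open>(-b, -a)\<close>.\<close>

definition inversions :: "nat \<Rightarrow> (int \<Rightarrow> int) \<Rightarrow> (int \<times> int) set" where
  "inversions n x = {(a, b). a \<in> pm_set n \<and> b \<in> pm_set n \<and> a < b \<and> inv x b < inv x a}"

definition gen_swaps :: "nat \<Rightarrow> int \<Rightarrow> int \<Rightarrow> bool" where
  "gen_swaps i p q \<longleftrightarrow> (i = 0 \<and> p = -1 \<and> q = 1) \<or>
     (i > 0 \<and> ((p = int i \<and> q = int i + 1) \<or> (p = - int i - 1 \<and> q = - int i)))"

lemma cox_gen_order:
  assumes "p \<noteq> 0" "q \<noteq> 0" "p < q"
  shows "cox_gen i p < cox_gen i q \<longleftrightarrow> \<not> gen_swaps i p q"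
  using assms by (auto simp: cox_gen_def gen_swaps_def)

text \<open>The pairs of values sitting at the two positions exchanged by \<open>s\<^sub>i\<close>: exactly these change
  their relative order when \<open>x\<close> is multiplied by \<open>s\<^sub>i\<close> on the right.\<close>

definition flipped :: "nat \<Rightarrow> (int \<Rightarrow> int) \<Rightarrow> nat \<Rightarrow> (int \<times> int) set" where
  "flipped n x i = {(a, b). a \<in> pm_set n \<and> b \<in> pm_set n \<and> a < b \<and>
      (gen_swaps i (inv x a) (inv x b) \<or> gen_swaps i (inv x b) (inv x a))}"

lemma inv_comp_cox_gen:
  assumes "x \<in> signed_perms n" "i < n"
  shows "inv (x \<circ> cox_gen i) = cox_gen i \<circ> inv x"
proof -
  have "bij x" using assms(1) permutes_bij signed_perm_permutes by blast
  moreover have "bij (cox_gen i)" using cox_gen_signed_perm[OF assms(2)] permutes_bij signed_perm_permutes by blast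
  ultimately show ?thesis by (simp add: o_inv_distrib inv_cox_gen)
qed

lemma inversions_comp_cox_gen:
  assumes x: "x \<in> signed_perms n" and i: "i < n"
  shows "(a, b) \<in> inversions n (x \<circ> cox_gen i) \<longleftrightarrow> ((a, b) \<in> inversions n x) \<noteq> ((a, b) \<in> flipped n x i)"
proof (cases "a \<in> pm_set n \<and> b \<in> pm_set n \<and> a < b")
  case True
  define P where "P = inv x a"
  define Q where "Q = inv x b"
  have P0: "P \<noteq> 0" using True signed_perm_in_iff[OF inv_signed_perm[OF x], of a] by (auto simp: P_def mem_pm_set_iff)
  have Q0: "Q \<noteq> 0" using True signed_perm_in_iff[OF inv_signed_perm[OF x], of b] by (auto simp: Q_def mem_pm_set_iff)
  have PQ: "P \<noteq> Q" using True by (metis P_def Q_def signed_perm_apply_inv[OF x] less_irrefl)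
  have "(a, b) \<in> inversions n (x \<circ> cox_gen i) \<longleftrightarrow> cox_gen i Q < cox_gen i P"
    using True by (simp add: inversions_def inv_comp_cox_gen[OF x i] P_def Q_def)
  also have "\<dots> \<longleftrightarrow> (Q < P) \<noteq> (gen_swaps i P Q \<or> gen_swaps i Q P)"
  proof (cases "Q < P")
    case True
    then show ?thesis using cox_gen_order[OF Q0 P0 True, of i] by (auto simp: gen_swaps_def)
  next
    case False
    then have "P < Q" using PQ by simp
    have ne: "cox_gen i P \<noteq> cox_gen i Q" using PQ by (metis cox_gen_invol)
    have "\<not> gen_swaps i Q P" using \<open>P < Q\<close> by (auto simp: gen_swaps_def)
    then show ?thesis using cox_gen_order[OF P0 Q0 \<open>P < Q\<close>, of i] False ne
      by auto
  qed
  finally show ?thesis using True by (simp add: inversions_def flipped_def P_def Q_def)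
qed (auto simp: inversions_def flipped_def)

definition descent :: "(int \<Rightarrow> int) \<Rightarrow> nat \<Rightarrow> bool" where
  "descent x i \<longleftrightarrow> (if i = 0 then x 1 < 0 else x (int i + 1) < x (int i))"

lemma gen_swaps_in: "gen_swaps i p q \<Longrightarrow> i < n \<Longrightarrow> p \<in> pm_set n \<and> q \<in> pm_set n"
  by (auto simp: gen_swaps_def mem_pm_set_iff)

lemma mem_flipped_iff:
  assumes x: "x \<in> signed_perms n" and i: "i < n"
  shows "(a, b) \<in> flipped n x i \<longleftrightarrow> a < b \<and>
     (\<exists>p q. gen_swaps i p q \<and> ((a = x p \<and> b = x q) \<or> (a = x q \<and> b = x p)))"
proof
  assume "(a, b) \<in> flipped n x i"
  then have h: "a < b" "gen_swaps i (inv x a) (inv x b) \<or> gen_swaps i (inv x b) (inv x a)"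
    unfolding flipped_def by simp_all
  have e: "a = x (inv x a)" "b = x (inv x b)" using signed_perm_apply_inv[OF x] by auto
  from h(2) show "a < b \<and> (\<exists>p q. gen_swaps i p q \<and> ((a = x p \<and> b = x q) \<or> (a = x q \<and> b = x p)))"
  proof
    assume "gen_swaps i (inv x a) (inv x b)"
    then show ?thesis using h(1) e by blast
  next
    assume "gen_swaps i (inv x b) (inv x a)"
    then show ?thesis using h(1) e by blast
  qed
next
  assume "a < b \<and> (\<exists>p q. gen_swaps i p q \<and> ((a = x p \<and> b = x q) \<or> (a = x q \<and> b = x p)))"
  then obtain p q where pq: "a < b" "gen_swaps i p q" "(a = x p \<and> b = x q) \<or> (a = x q \<and> b = x p)" by blast
  have pqV: "p \<in> pm_set n" "q \<in> pm_set n" using gen_swaps_in[OF pq(2) i] by auto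
  have ip: "inv x (x p) = p" "inv x (x q) = q" using signed_perm_inv_apply[OF x] by auto
  have V: "x p \<in> pm_set n" "x q \<in> pm_set n" using pqV signed_perm_in_iff[OF x] by auto
  from pq(3) show "(a, b) \<in> flipped n x i"
  proof
    assume "a = x p \<and> b = x q"
    then show ?thesis unfolding flipped_def using pq(1,2) ip V by simp
  next
    assume "a = x q \<and> b = x p"
    then show ?thesis unfolding flipped_def using pq(1,2) ip V by (simp add: disj_commute)
  qed
qed

lemma signed_perm_nonzero: assumes x: "x \<in> signed_perms n" and "i \<in> pm_set n" shows "x i \<noteq> 0"
proof -
  have "x i \<in> pm_set n" using assms signed_perm_in_iff[OF x] by blast
  then show ?thesis unfolding mem_pm_set_iff by blast
qed

lemma signed_perm_facts:
  assumes x: "x \<in> signed_perms n" and i: "0 < i" "i < n"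
  shows "x (- int i - 1) = - x (int i + 1)" "x (- int i) = - x (int i)"
    "x (int i) \<noteq> x (int i + 1)" "x (int i) \<noteq> - x (int i + 1)"
    "x (int i) \<noteq> 0" "x (int i + 1) \<noteq> 0"
proof -
  show 1: "x (- int i - 1) = - x (int i + 1)" using signed_perm_odd[OF x, of "int i + 1"] by simp
  show "x (- int i) = - x (int i)" using signed_perm_odd[OF x] by simp
  show "x (int i) \<noteq> x (int i + 1)" using signed_perm_eq_iff[OF x] by simp
  show "x (int i) \<noteq> - x (int i + 1)" using signed_perm_eq_iff[OF x, of "int i" "- int i - 1"] 1 by simp
  have "int i \<in> pm_set n" "int i + 1 \<in> pm_set n" using i by (auto simp: mem_pm_set_iff)
  then show "x (int i) \<noteq> 0" "x (int i + 1) \<noteq> 0" using signed_perm_nonzero[OF x] by auto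
qed

lemma signed_perm_facts0:
  assumes x: "x \<in> signed_perms n" and i: "0 < n"
  shows "x (- 1) = - x 1" "x 1 \<noteq> 0"
proof -
  show "x (- 1) = - x 1" using signed_perm_odd[OF x] by simp
  have "1 \<in> pm_set n" using i by (auto simp: mem_pm_set_iff)
  then show "x 1 \<noteq> 0" using signed_perm_nonzero[OF x] by auto
qed

lemma flipped_in_inversions_iff:
  assumes x: "x \<in> signed_perms n" and i: "i < n" and ab: "(a, b) \<in> flipped n x i"
  shows "(a, b) \<in> inversions n x \<longleftrightarrow> descent x i"
proof -
  obtain p q where pq: "a < b" "gen_swaps i p q" "(a = x p \<and> b = x q) \<or> (a = x q \<and> b = x p)"
    using ab mem_flipped_iff[OF x i] by blast
  have ab': "a \<in> pm_set n" "b \<in> pm_set n" using ab by (auto simp: flipped_def)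
  have II: "(a, b) \<in> inversions n x \<longleftrightarrow> inv x b < inv x a" using ab' pq(1) by (simp add: inversions_def)
  have ip: "inv x (x p) = p" "inv x (x q) = q" using signed_perm_inv_apply[OF x] by auto
  have pq_lt: "p < q" using pq(2) by (auto simp: gen_swaps_def)
  have key: "descent x i \<longleftrightarrow> x q < x p"
  proof (cases "i = 0")
    case True
    then have "p = -1" "q = 1" using pq(2) by (auto simp: gen_swaps_def)
    then show ?thesis using signed_perm_facts0[OF x] i True by (auto simp: descent_def)
  next
    case False
    then have "(p = int i \<and> q = int i + 1) \<or> (p = - int i - 1 \<and> q = - int i)"
      using pq(2) by (auto simp: gen_swaps_def)
    then show ?thesis using signed_perm_facts[OF x _ i] False by (auto simp: descent_def)
  qed
  from pq(3) show ?thesis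
  proof
    assume h: "a = x p \<and> b = x q"
    then have "inv x a = p" "inv x b = q" using ip by auto
    then show ?thesis using II key h pq_lt pq(1) by auto
  next
    assume h: "a = x q \<and> b = x p"
    then have "inv x a = q" "inv x b = p" using ip by auto
    then show ?thesis using II key h pq_lt pq(1) by auto
  qed
qed

definition flipped_root :: "(int \<Rightarrow> int) \<Rightarrow> nat \<Rightarrow> int \<times> int" where
  "flipped_root x i = (if i = 0 then (- \<bar>x 1\<bar>, \<bar>x 1\<bar>)
     else if x i + x (int i + 1) > 0 then (min (x i) (x (int i + 1)), max (x i) (x (int i + 1)))
     else (- max (x i) (x (int i + 1)), - min (x i) (x (int i + 1))))"

lemma flipped_cases:
  assumes x: "x \<in> signed_perms n" and i: "i < n" and ab: "(a, b) \<in> flipped n x i"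
  shows "(i = 0 \<and> a = - \<bar>x 1\<bar> \<and> b = \<bar>x 1\<bar>) \<or>
    (i > 0 \<and> ((a = min (x i) (x (int i + 1)) \<and> b = max (x i) (x (int i + 1))) \<or>
               (a = - max (x i) (x (int i + 1)) \<and> b = - min (x i) (x (int i + 1)))))"
proof -
  obtain p q where pq: "a < b" "gen_swaps i p q" "(a = x p \<and> b = x q) \<or> (a = x q \<and> b = x p)"
    using ab mem_flipped_iff[OF x i] by blast
  show ?thesis
  proof (cases "i = 0")
    case True
    then have "p = -1" "q = 1" using pq(2) by (auto simp: gen_swaps_def)
    then have "(a = - x 1 \<and> b = x 1) \<or> (a = x 1 \<and> b = - x 1)"
      using pq(3) signed_perm_facts0[OF x] i True by auto
    then show ?thesis using pq(1) True by auto
  next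
    case False
    then have "(p = int i \<and> q = int i + 1) \<or> (p = - int i - 1 \<and> q = - int i)"
      using pq(2) by (auto simp: gen_swaps_def)
    then have "(a = x i \<and> b = x (int i + 1)) \<or> (a = x (int i + 1) \<and> b = x i) \<or>
       (a = - x (int i + 1) \<and> b = - x i) \<or> (a = - x i \<and> b = - x (int i + 1))"
      using pq(3) signed_perm_facts[OF x _ i] False by auto
    then show ?thesis using pq(1) False by (auto simp: min_def max_def)
  qed
qed

lemma flipped_memI:
  assumes x: "x \<in> signed_perms n" and i: "i < n" and s: "gen_swaps i p q"
  shows "x p < x q \<Longrightarrow> (x p, x q) \<in> flipped n x i" and "x q < x p \<Longrightarrow> (x q, x p) \<in> flipped n x i"
proof -
  assume "x p < x q"
  then show "(x p, x q) \<in> flipped n x i" using mem_flipped_iff[OF x i, of "x p" "x q"] s by blast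
next
  assume "x q < x p"
  then show "(x q, x p) \<in> flipped n x i" using mem_flipped_iff[OF x i, of "x q" "x p"] s by blast
qed

lemma flipped_min_max:
  assumes x: "x \<in> signed_perms n" and i: "i < n" and s: "gen_swaps i p q"
  shows "(min (x p) (x q), max (x p) (x q)) \<in> flipped n x i"
proof -
  have "p \<noteq> q" using s by (auto simp: gen_swaps_def)
  then have "x p \<noteq> x q" using signed_perm_eq_iff[OF x] by simp
  then show ?thesis using flipped_memI[OF x i s] by (cases "x p < x q") (auto simp: min_def max_def)
qed

lemma flipped_elems:
  assumes x: "x \<in> signed_perms n" and i: "i < n"
  shows "i = 0 \<Longrightarrow> (- \<bar>x 1\<bar>, \<bar>x 1\<bar>) \<in> flipped n x i"
    and "i > 0 \<Longrightarrow> (min (x i) (x (int i + 1)), max (x i) (x (int i + 1))) \<in> flipped n x i"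
    and "i > 0 \<Longrightarrow> (- max (x i) (x (int i + 1)), - min (x i) (x (int i + 1))) \<in> flipped n x i"
proof -
  assume "i = 0"
  then show "(- \<bar>x 1\<bar>, \<bar>x 1\<bar>) \<in> flipped n x i"
    using flipped_min_max[OF x i, of "-1" 1] signed_perm_odd[OF x, of 1] signed_perm_facts0(2)[OF x] i
    by (auto simp: gen_swaps_def min_def max_def abs_if)
next
  assume i0: "i > 0"
  show "(min (x i) (x (int i + 1)), max (x i) (x (int i + 1))) \<in> flipped n x i"
    using flipped_min_max[OF x i, of "int i" "int i + 1"] i0 by (simp add: gen_swaps_def)
  show "(- max (x i) (x (int i + 1)), - min (x i) (x (int i + 1))) \<in> flipped n x i"
    using flipped_min_max[OF x i, of "- int i - 1" "- int i"] i0 signed_perm_facts(1,2)[OF x i0 i]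
    by (auto simp: gen_swaps_def min_def max_def split: if_splits)
qed

lemma flipped_root_unique:
  assumes x: "x \<in> signed_perms n" and i: "i < n"
  shows "flipped n x i \<inter> {(a, b). 0 \<le> a + b} = {flipped_root x i}"
proof (intro set_eqI iffI)
  fix ab assume h: "ab \<in> flipped n x i \<inter> {(a, b). 0 \<le> a + b}"
  obtain a b where ab: "ab = (a, b)" by fastforce
  have c: "(i = 0 \<and> a = - \<bar>x 1\<bar> \<and> b = \<bar>x 1\<bar>) \<or>
    (i > 0 \<and> ((a = min (x i) (x (int i + 1)) \<and> b = max (x i) (x (int i + 1))) \<or>
               (a = - max (x i) (x (int i + 1)) \<and> b = - min (x i) (x (int i + 1)))))"
    using flipped_cases[OF x i] h ab by blast
  have s: "0 \<le> a + b" using h ab by blast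
  have "i > 0 \<Longrightarrow> x (int i) \<noteq> - x (int i + 1)" using signed_perm_facts[OF x _ i] by blast
  then show "ab \<in> {flipped_root x i}" using c s ab by (auto simp: flipped_root_def min_def max_def)
next
  fix ab assume "ab \<in> {flipped_root x i}"
  then have ab: "ab = flipped_root x i" by simp
  show "ab \<in> flipped n x i \<inter> {(a, b). 0 \<le> a + b}"
  proof (cases "i = 0")
    case True
    then show ?thesis using ab flipped_elems(1)[OF x i] by (simp add: flipped_root_def)
  next
    case False
    then show ?thesis using ab flipped_elems(2,3)[OF x i] by (auto simp: flipped_root_def min_def max_def)
  qed
qed

text \<open>A reflection \<open>stransp a b\<close> accounts for the two inversions \<open>(a, b)\<close> and \<open>(-b, -a)\<close>, which
  coincide when \<open>b = -a\<close>; keeping those with \<open>a + b \<ge> 0\<close> counts it once.\<close>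

definition inv_length :: "nat \<Rightarrow> (int \<Rightarrow> int) \<Rightarrow> nat" where
  "inv_length n x = card (inversions n x \<inter> {(a, b). 0 \<le> a + b})"

lemma inversions_subset: "inversions n x \<subseteq> pm_set n \<times> pm_set n"
  by (auto simp: inversions_def)

lemma finite_inversions: "finite (inversions n x)"
  using finite_subset[OF inversions_subset] finite_pm_set by blast

lemma inversions_id: "inversions n id = {}"
  by (auto simp: inversions_def)

lemma inv_length_id: "inv_length n id = 0"
  by (simp add: inv_length_def inversions_id)

lemma inv_length_comp_cox_gen:
  assumes x: "x \<in> signed_perms n" and i: "i < n"
  shows "inv_length n (x \<circ> cox_gen i) = (if descent x i then inv_length n x - 1 else inv_length n x + 1)"
    and "descent x i \<Longrightarrow> 1 \<le> inv_length n x"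
proof -
  define P where "P = {(a::int, b::int). 0 \<le> a + b}"
  define S where "S = inversions n x \<inter> P"
  have fin: "finite S" using finite_inversions by (simp add: S_def)
  have flipped_pos: "flipped n x i \<inter> P = {flipped_root x i}" using flipped_root_unique[OF x i] by (simp add: P_def)
  have root_flipped: "flipped_root x i \<in> flipped n x i" using flipped_pos by blast
  have root_pos: "flipped_root x i \<in> P" using flipped_pos by blast
  have S': "inversions n (x \<circ> cox_gen i) \<inter> P = (S - {flipped_root x i}) \<union> ({flipped_root x i} - S)"
  proof (intro set_eqI)
    fix ab :: "int \<times> int"
    obtain a b where ab: "ab = (a, b)" by fastforce
    have "(a, b) \<in> P \<Longrightarrow> (a, b) \<in> flipped n x i \<longleftrightarrow> (a, b) = flipped_root x i" using flipped_pos by blast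
    then show "ab \<in> inversions n (x \<circ> cox_gen i) \<inter> P \<longleftrightarrow> ab \<in> (S - {flipped_root x i}) \<union> ({flipped_root x i} - S)"
      unfolding ab S_def using inversions_comp_cox_gen[OF x i, of a b] root_pos by auto
  qed
  have root_inv: "flipped_root x i \<in> inversions n x \<longleftrightarrow> descent x i" using flipped_in_inversions_iff[OF x i] root_flipped by (cases "flipped_root x i") auto
  show "inv_length n (x \<circ> cox_gen i) = (if descent x i then inv_length n x - 1 else inv_length n x + 1)"
  proof (cases "descent x i")
    case True
    then have "flipped_root x i \<in> S" using root_inv root_pos by (simp add: S_def)
    then have "inversions n (x \<circ> cox_gen i) \<inter> P = S - {flipped_root x i}" using S' by auto
    then show ?thesis using True \<open>flipped_root x i \<in> S\<close> fin
      by (simp add: inv_length_def P_def[symmetric] S_def[symmetric])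
  next
    case False
    then have "flipped_root x i \<notin> S" using root_inv by (simp add: S_def)
    then have "inversions n (x \<circ> cox_gen i) \<inter> P = insert (flipped_root x i) S" using S' by auto
    then show ?thesis using False \<open>flipped_root x i \<notin> S\<close> fin
      by (simp add: inv_length_def P_def[symmetric] S_def[symmetric])
  qed
  show "descent x i \<Longrightarrow> 1 \<le> inv_length n x"
  proof -
    assume "descent x i"
    then have "flipped_root x i \<in> S" using root_inv root_pos by (simp add: S_def)
    then have "S \<noteq> {}" by auto
    then show ?thesis using fin by (simp add: inv_length_def P_def[symmetric] S_def[symmetric] Suc_le_eq card_gt_0_iff)
  qed
qed

lemma no_descent_ge:
  assumes x: "x \<in> signed_perms n" and nd: "\<And>i. i < n \<Longrightarrow> \<not> descent x i"
    and k: "1 \<le> k" "k \<le> int n"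
  shows "k \<le> x k"
  using k
proof (induction k rule: int_ge_induct)
  case base
  have "\<not> x 1 < 0" using nd[of 0] base by (simp add: descent_def)
  moreover have "x 1 \<noteq> 0" using signed_perm_facts0[OF x] base by simp
  ultimately show ?case by simp
next
  case (step k)
  have "\<not> x (k + 1) < x k" using nd[of "nat k"] step by (simp add: descent_def)
  moreover have "x k \<noteq> x (k + 1)" using signed_perm_eq_iff[OF x] by simp
  ultimately show ?case using step by simp
qed

lemma no_descent_le:
  assumes x: "x \<in> signed_perms n" and nd: "\<And>i. i < n \<Longrightarrow> \<not> descent x i"
    and k: "1 \<le> k" "k \<le> int n"
  shows "x k \<le> k"
  using k(2,1)
proof (induction k rule: int_le_induct)
  case base
  then have "x (int n) \<in> pm_set n" using signed_perm_in_iff[OF x] by (simp add: mem_pm_set_iff)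
  then show ?case by (simp add: mem_pm_set_iff)
next
  case (step k)
  have "\<not> x k < x (k - 1)" using nd[of "nat (k - 1)"] step by (simp add: descent_def)
  moreover have "x (k - 1) \<noteq> x k" using signed_perm_eq_iff[OF x] by simp
  ultimately show ?case using step by simp
qed

lemma no_descent_imp_id:
  assumes x: "x \<in> signed_perms n" and nd: "\<And>i. i < n \<Longrightarrow> \<not> descent x i"
  shows "x = id"
proof
  fix k
  have pos: "x k = k" if "1 \<le> k" "k \<le> int n" for k
    using no_descent_ge[OF x nd that] no_descent_le[OF x nd that] by simp
  consider "k \<notin> pm_set n" | "1 \<le> k" "k \<le> int n" | "1 \<le> - k" "- k \<le> int n"
    unfolding mem_pm_set_iff by arith
  then show "x k = id k"
  proof cases
    case 1 then show ?thesis using signed_perm_fixes[OF x] by simp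
  next
    case 2 then show ?thesis using pos by simp
  next
    case 3 then show ?thesis using pos signed_perm_odd[OF x, of k] by simp
  qed
qed

definition word_prod :: "nat list \<Rightarrow> int \<Rightarrow> int" where
  "word_prod ws = foldr (\<circ>) (map cox_gen ws) id"

lemma foldr_comp_id: "foldr (\<circ>) fs h = foldr (\<circ>) fs id \<circ> h"
  by (induction fs) (auto simp: fun_eq_iff)

lemma word_prod_snoc: "word_prod (ws @ [i]) = word_prod ws \<circ> cox_gen i"
  unfolding word_prod_def by (simp add: foldr_comp_id[of _ "cox_gen i"])

lemma word_prod_Nil: "word_prod [] = id" by (simp add: word_prod_def)

lemma word_prod_signed_perm: "set ws \<subseteq> {..<n} \<Longrightarrow> word_prod ws \<in> signed_perms n"
proof (induction ws rule: rev_induct)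
  case Nil then show ?case by (metis word_prod_Nil id_signed_perm)
next
  case (snoc i ws)
  then have "word_prod ws \<in> signed_perms n" "i < n" by auto
  then show ?case unfolding word_prod_snoc by (intro comp_signed_perm cox_gen_signed_perm)
qed

lemma inv_length_word_prod: "set ws \<subseteq> {..<n} \<Longrightarrow> inv_length n (word_prod ws) \<le> length ws"
proof (induction ws rule: rev_induct)
  case Nil then show ?case by (metis word_prod_Nil inv_length_id le_refl list.size(3))
next
  case (snoc i ws)
  then have "word_prod ws \<in> signed_perms n" "i < n" "inv_length n (word_prod ws) \<le> length ws"
    using word_prod_signed_perm by auto
  moreover have "inv_length n (word_prod ws \<circ> cox_gen i) \<le> inv_length n (word_prod ws) + 1"
    using inv_length_comp_cox_gen(1)[of "word_prod ws" n i] calculation(1,2) by (cases "descent (word_prod ws) i") auto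
  ultimately show ?case unfolding word_prod_snoc by (simp only: length_append list.size)
qed

lemma exists_descent:
  assumes x: "x \<in> signed_perms n" and "x \<noteq> id"
  shows "\<exists>i<n. descent x i"
  using no_descent_imp_id[OF x] assms(2) by blast

lemma comp_cox_gen_cox_gen: "x \<circ> cox_gen i \<circ> cox_gen i = x"
  by (simp add: fun_eq_iff cox_gen_invol)

lemma exists_reduced_word:
  "x \<in> signed_perms n \<Longrightarrow> \<exists>ws. length ws = inv_length n x \<and> set ws \<subseteq> {..<n} \<and> word_prod ws = x"
proof (induction "inv_length n x" arbitrary: x)
  case 0
  have "x = id"
  proof (rule ccontr)
    assume "x \<noteq> id"
    then obtain i where "i < n" "descent x i" using exists_descent[OF "0.prems"] by blast
    then show False using inv_length_comp_cox_gen(2)[OF "0.prems" \<open>i < n\<close>] "0.hyps" by simp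
  qed
  then show ?case using "0.hyps" by (intro exI[of _ "[]"]) (simp add: word_prod_Nil)
next
  case (Suc m)
  have "x \<noteq> id" using Suc.hyps(2) inv_length_id by (metis nat.distinct(1))
  then obtain i where i: "i < n" "descent x i" using exists_descent[OF Suc.prems] by blast
  define y where "y = x \<circ> cox_gen i"
  have y: "y \<in> signed_perms n" using Suc.prems i by (simp add: y_def comp_signed_perm cox_gen_signed_perm)
  have "inv_length n y = m" using inv_length_comp_cox_gen(1)[OF Suc.prems i(1)] i(2) Suc.hyps(2) by (simp add: y_def)
  then obtain ws where ws: "length ws = m" "set ws \<subseteq> {..<n}" "word_prod ws = y"
    using Suc.hyps(1)[OF _ y] by metis
  show ?case
    by (rule exI[of _ "ws @ [i]"]) (use ws i Suc.hyps(2) in \<open>simp add: word_prod_snoc y_def comp_cox_gen_cox_gen\<close>)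
qed

lemma cox_len_eq_inv_length:
  assumes x: "x \<in> signed_perms n"
  shows "cox_len n x = inv_length n x"
proof -
  obtain ws where ws: "length ws = inv_length n x" "set ws \<subseteq> {..<n}" "word_prod ws = x"
    using exists_reduced_word[OF x] by blast
  show ?thesis
    unfolding cox_len_def
  proof (rule Least_equality)
    show "\<exists>ws. length ws = inv_length n x \<and> set ws \<subseteq> {..<n} \<and> foldr (\<circ>) (map cox_gen ws) id = x"
      using ws by (auto simp: word_prod_def)
  next
    fix k assume "\<exists>ws. length ws = k \<and> set ws \<subseteq> {..<n} \<and> foldr (\<circ>) (map cox_gen ws) id = x"
    then obtain vs where "length vs = k" "set vs \<subseteq> {..<n}" "word_prod vs = x"
      by (auto simp: word_prod_def)
    then show "inv_length n x \<le> k" using inv_length_word_prod by metis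
  qed
qed

text \<open>\<open>s\<^sub>i\<close> exchanges the positions \<open>gen_lo i < gen_hi i\<close>, and their negatives.\<close>

definition gen_lo :: "nat \<Rightarrow> int" where "gen_lo i = (if i = 0 then -1 else int i)"
definition gen_hi :: "nat \<Rightarrow> int" where "gen_hi i = (if i = 0 then 1 else int i + 1)"

lemma stransp_comp:
  assumes x: "x \<in> signed_perms n" and i: "i < n"
  shows "stransp (x (gen_lo i)) (x (gen_hi i)) \<circ> x = x \<circ> cox_gen i"
proof (rule ext)
  fix p
  show "(stransp (x (gen_lo i)) (x (gen_hi i)) \<circ> x) p = (x \<circ> cox_gen i) p"
  proof (cases "i = 0")
    case True
    have f: "x (- 1) = - x 1" "x 1 \<noteq> 0" using signed_perm_facts0[OF x] i True by auto
    have inj: "x p = x q \<longleftrightarrow> p = q" for q using signed_perm_eq_iff[OF x] by blast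
    have o: "x (- p) = - x p" using signed_perm_odd[OF x] by blast
    show ?thesis using True f inj[of 1] inj[of "-1"] o
      by (auto simp: stransp_def gen_lo_def gen_hi_def cox_gen_def)
  next
    case False
    have f: "x (- int i - 1) = - x (int i + 1)" "x (- int i) = - x (int i)"
      "x (int i) \<noteq> x (int i + 1)" "x (int i) \<noteq> - x (int i + 1)" "x (int i) \<noteq> 0" "x (int i + 1) \<noteq> 0"
      using signed_perm_facts[OF x _ i] False by auto
    have inj: "x p = x q \<longleftrightarrow> p = q" for q using signed_perm_eq_iff[OF x] by blast
    have o: "x (- p) = - x p" using signed_perm_odd[OF x] by blast
    have o2: "- x p = x (- p)" using o by simp
    show ?thesis using False f inj[of "int i"] inj[of "int i + 1"] inj[of "- int i"] inj[of "- int i - 1"]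
      by (auto simp: stransp_def gen_lo_def gen_hi_def cox_gen_def o2)
  qed
qed

lemma stransp_neg: "a \<noteq> 0 \<Longrightarrow> b \<noteq> 0 \<Longrightarrow> stransp (- a) (- b) = stransp a b"
  by (auto simp: stransp_def fun_eq_iff)

lemma gen_lo_hi: "i < n \<Longrightarrow> gen_lo i \<in> pm_set n \<and> gen_hi i \<in> pm_set n \<and> gen_lo i < gen_hi i"
  by (auto simp: gen_lo_def gen_hi_def mem_pm_set_iff)

lemma stransp_flipped:
  assumes x: "x \<in> signed_perms n" and i: "i < n" and ab: "(a, b) \<in> flipped n x i"
  shows "stransp a b = stransp (x (gen_lo i)) (x (gen_hi i))"
proof (cases "i = 0")
  case True
  have f: "x (- 1) = - x 1" "x 1 \<noteq> 0" using signed_perm_facts0[OF x] i True by auto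
  have "a = - \<bar>x 1\<bar> \<and> b = \<bar>x 1\<bar>" using flipped_cases[OF x i ab] True by auto
  then show ?thesis using True f stransp_commute[of "x 1" "- x 1"] by (cases "x 1 < 0") (auto simp: gen_lo_def gen_hi_def)
next
  case False
  have f: "x (int i) \<noteq> 0" "x (int i + 1) \<noteq> 0" using signed_perm_facts[OF x _ i] False by auto
  have c: "(a = min (x i) (x (int i + 1)) \<and> b = max (x i) (x (int i + 1))) \<or>
               (a = - max (x i) (x (int i + 1)) \<and> b = - min (x i) (x (int i + 1)))"
    using flipped_cases[OF x i ab] False by auto
  have t: "stransp (x i) (x (int i + 1)) = stransp (x (int i + 1)) (x i)" by (rule stransp_commute)
  have t2: "stransp (- x i) (- x (int i + 1)) = stransp (x i) (x (int i + 1))"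
       "stransp (- x (int i + 1)) (- x i) = stransp (x (int i + 1)) (x i)"
    using stransp_neg f by auto
  show ?thesis using c t t2 False by (auto simp: gen_lo_def gen_hi_def min_def max_def)
qed

lemma cox_gen_conj:
  assumes w: "w \<in> signed_perms n" and i: "i < n"
  shows "w \<circ> cox_gen i \<circ> inv w = stransp (w (gen_lo i)) (w (gen_hi i))"
proof -
  have "w \<circ> cox_gen i \<circ> inv w = (stransp (w (gen_lo i)) (w (gen_hi i)) \<circ> w) \<circ> inv w"
    using stransp_comp[OF w i] by simp
  also have "\<dots> = stransp (w (gen_lo i)) (w (gen_hi i)) \<circ> (w \<circ> inv w)" by (rule comp_assoc)
  also have "\<dots> = stransp (w (gen_lo i)) (w (gen_hi i)) \<circ> id"
    by (simp only: permutes_inv_o(1)[OF signed_perm_permutes[OF w]])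
  also have "\<dots> = stransp (w (gen_lo i)) (w (gen_hi i))" by (rule comp_id)
  finally show ?thesis .
qed

lemma reflection_eq_stransp:
  assumes "t \<in> reflections n"
  shows "\<exists>a b. a \<in> pm_set n \<and> b \<in> pm_set n \<and> a < b \<and> t = stransp a b"
proof -
  obtain w i where wi: "w \<in> signed_perms n" "i < n" "t = w \<circ> cox_gen i \<circ> inv w"
    using assms by (auto simp: reflections_def)
  have t: "t = stransp (w (gen_lo i)) (w (gen_hi i))" using cox_gen_conj[OF wi(1,2)] wi(3) by simp
  have in1: "w (gen_lo i) \<in> pm_set n" "w (gen_hi i) \<in> pm_set n"
    using gen_lo_hi[OF wi(2)] signed_perm_in_iff[OF wi(1)] by auto
  have ne: "w (gen_lo i) \<noteq> w (gen_hi i)" using gen_lo_hi[OF wi(2)] signed_perm_eq_iff[OF wi(1)] by auto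
  show ?thesis
  proof (cases "w (gen_lo i) < w (gen_hi i)")
    case True then show ?thesis using t in1 by blast
  next
    case False then show ?thesis using t in1 ne stransp_commute by (metis linorder_neqE_linordered_idom)
  qed
qed

text \<open>Conjugate \<open>s\<^sub>0\<close> (if \<open>b = -a\<close>) or \<open>s\<^sub>1\<close> by a signed permutation sending \<open>1\<close> to \<open>a\<close> and \<open>2\<close> to \<open>b\<close>.\<close>

lemma stransp_in_reflections:
  assumes ab: "a \<in> pm_set n" "b \<in> pm_set n" "a < b"
  shows "stransp a b \<in> reflections n"
proof -
  have n1: "1 \<in> pm_set n" using ab(1) by (auto simp: mem_pm_set_iff)
  show ?thesis
  proof (cases "b = - a")
    case True
    define w where "w = stransp 1 a"
    have w: "w \<in> signed_perms n" using stransp_signed_perm[OF n1 ab(1)] by (simp add: w_def)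
    have "w (gen_lo 0) = - a" "w (gen_hi 0) = a"
      using ab(1) by (auto simp: w_def stransp_def gen_lo_def gen_hi_def mem_pm_set_iff)
    then have tw: "stransp a b = w \<circ> cox_gen 0 \<circ> inv w"
      using cox_gen_conj[OF w, of 0] n1 True stransp_commute by (auto simp: mem_pm_set_iff)
    have "0 < n" using n1 by (auto simp: mem_pm_set_iff)
    then show ?thesis unfolding reflections_def using w tw by blast
  next
    case False
    have n2: "2 \<le> n" using ab False by (auto simp: mem_pm_set_iff)
    define u where "u = stransp 1 a (2::int)"
    have uV: "u \<in> pm_set n" using ab(1) n2 by (auto simp: u_def stransp_def mem_pm_set_iff)
    have ua: "u \<noteq> a" "u \<noteq> - a" using ab(1) by (auto simp: u_def stransp_def mem_pm_set_iff)
    define w where "w = stransp u b \<circ> stransp 1 a"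
    have w: "w \<in> signed_perms n"
      unfolding w_def using stransp_signed_perm[OF uV ab(2)] stransp_signed_perm[OF n1 ab(1)] by (rule comp_signed_perm)
    have "stransp 1 a 1 = a" by (simp add: stransp_def)
    moreover have "stransp u b a = a" using ua ab(3) False by (auto simp: stransp_def)
    ultimately have w1: "w (gen_lo 1) = a" by (simp add: w_def gen_lo_def)
    have "stransp u b u = b" by (simp add: stransp_def)
    then have w2: "w (gen_hi 1) = b" by (simp add: w_def gen_hi_def u_def)
    have tw: "stransp a b = w \<circ> cox_gen 1 \<circ> inv w" using cox_gen_conj[OF w, of 1] n2 w1 w2 by simp
    have "1 < n" using n2 by simp
    then show ?thesis unfolding reflections_def using w tw by blast
  qed
qed

lemma reflections_iff:
  "t \<in> reflections n \<longleftrightarrow> (\<exists>a b. a \<in> pm_set n \<and> b \<in> pm_set n \<and> a < b \<and> t = stransp a b)"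
  using reflection_eq_stransp stransp_in_reflections by blast

lemma inv_stransp: "a \<noteq> 0 \<Longrightarrow> b \<noteq> 0 \<Longrightarrow> inv (stransp a b) = stransp a b"
  by (rule inv_unique_comp) (auto simp: fun_eq_iff stransp_invol)

lemma inversions_stransp_comp:
  assumes x: "x \<in> signed_perms n" and ab: "a \<in> pm_set n" "b \<in> pm_set n" "a < b"
  shows "(a, b) \<in> inversions n (stransp a b \<circ> x) \<longleftrightarrow> (a, b) \<notin> inversions n x"
proof -
  have t: "stransp a b \<in> signed_perms n" using stransp_signed_perm[OF ab(1,2)] .
  have bt: "bij (stransp a b)" "bij x" using permutes_bij signed_perm_permutes t x by blast+
  have nz: "a \<noteq> 0" "b \<noteq> 0" using ab by (auto simp: mem_pm_set_iff)
  have i: "inv (stransp a b \<circ> x) = inv x \<circ> stransp a b" using o_inv_distrib[OF bt(1,2)] inv_stransp[OF nz] by simp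
  have "inv x a \<noteq> inv x b" using ab(3) by (metis less_irrefl signed_perm_apply_inv[OF x])
  moreover have "stransp a b a = b" "stransp a b b = a" using ab(3) by (auto simp: stransp_def)
  ultimately show ?thesis using ab by (auto simp: inversions_def i)
qed

lemma inversions_comp_descent:
  assumes x: "x \<in> signed_perms n" and i: "i < n" and d: "descent x i"
  shows "inversions n (x \<circ> cox_gen i) = inversions n x - flipped n x i"
proof -
  have "flipped n x i \<subseteq> inversions n x" using flipped_in_inversions_iff[OF x i] d by auto
  then show ?thesis using inversions_comp_cox_gen[OF x i] by auto
qed

lemma inversions_comp_ascent:
  assumes x: "x \<in> signed_perms n" and i: "i < n" and d: "\<not> descent x i"
  shows "inversions n (x \<circ> cox_gen i) = inversions n x \<union> flipped n x i"
proof -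
  have "flipped n x i \<inter> inversions n x = {}" using flipped_in_inversions_iff[OF x i] d by auto
  then show ?thesis using inversions_comp_cox_gen[OF x i] by auto
qed

lemma inv_length_stransp_comp:
  assumes "x \<in> signed_perms n" "a \<in> pm_set n" "b \<in> pm_set n" "a < b" "(a, b) \<in> inversions n x"
  shows "inv_length n (stransp a b \<circ> x) < inv_length n x"
  using assms
proof (induction "inv_length n x" arbitrary: x rule: less_induct)
  case less
  note x = less.prems(1)
  have "x \<noteq> id" using less.prems(5) inversions_id by auto
  then obtain i where i: "i < n" "descent x i" using exists_descent[OF x] by blast
  define y where "y = x \<circ> cox_gen i"
  have y: "y \<in> signed_perms n" using x i by (simp add: y_def comp_signed_perm cox_gen_signed_perm)
  have L1: "1 \<le> inv_length n x" using inv_length_comp_cox_gen(2)[OF x i(1) i(2)] .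
  have Ly: "inv_length n y = inv_length n x - 1" using inv_length_comp_cox_gen(1)[OF x i(1)] i(2) by (simp add: y_def)
  have xy: "x = y \<circ> cox_gen i" by (simp add: y_def comp_cox_gen_cox_gen)
  show ?case
  proof (cases "(a, b) \<in> flipped n x i")
    case True
    have "stransp a b \<circ> x = y" using stransp_flipped[OF x i(1) True] stransp_comp[OF x i(1)] by (simp add: y_def)
    then show ?thesis using Ly L1 by simp
  next
    case False
    have "(a, b) \<in> inversions n y" using inversions_comp_descent[OF x i(1,2)] less.prems(5) False by (simp add: y_def)
    then have IH: "inv_length n (stransp a b \<circ> y) < inv_length n y"
      using less.hyps[of y] Ly L1 y less.prems(2-4) by simp
    have ty: "stransp a b \<circ> y \<in> signed_perms n" using stransp_signed_perm[OF less.prems(2,3)] y by (rule comp_signed_perm)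
    have "stransp a b \<circ> x = (stransp a b \<circ> y) \<circ> cox_gen i" using xy by (simp add: comp_assoc)
    moreover have "inv_length n ((stransp a b \<circ> y) \<circ> cox_gen i) \<le> inv_length n (stransp a b \<circ> y) + 1"
      using inv_length_comp_cox_gen(1)[OF ty i(1)] by (cases "descent (stransp a b \<circ> y) i") auto
    ultimately show ?thesis using IH Ly L1 by simp
  qed
qed

lemma stransp_in_inv_set_iff:
  assumes x: "x \<in> signed_perms n" and ab: "a \<in> pm_set n" "b \<in> pm_set n" "a < b"
  shows "stransp a b \<in> inv_set n x \<longleftrightarrow> (a, b) \<in> inversions n x"
proof -
  have t: "stransp a b \<in> signed_perms n" using stransp_signed_perm[OF ab(1,2)] .
  have tx: "stransp a b \<circ> x \<in> signed_perms n" using t x by (rule comp_signed_perm)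
  have r: "stransp a b \<in> reflections n" using reflections_iff ab by blast
  have nz: "a \<noteq> 0" "b \<noteq> 0" using ab by (auto simp: mem_pm_set_iff)
  have tt: "stransp a b \<circ> (stransp a b \<circ> x) = x" using stransp_invol[OF nz] by (simp add: fun_eq_iff)
  have "stransp a b \<in> inv_set n x \<longleftrightarrow> inv_length n (stransp a b \<circ> x) < inv_length n x"
    using r by (simp add: inv_set_def cox_len_eq_inv_length[OF x] cox_len_eq_inv_length[OF tx])
  also have "\<dots> \<longleftrightarrow> (a, b) \<in> inversions n x"
  proof
    assume h: "inv_length n (stransp a b \<circ> x) < inv_length n x"
    show "(a, b) \<in> inversions n x"
    proof (rule ccontr)
      assume "(a, b) \<notin> inversions n x"
      then have "(a, b) \<in> inversions n (stransp a b \<circ> x)" using inversions_stransp_comp[OF x ab] by simp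
      from inv_length_stransp_comp[OF tx ab this] have "inv_length n x < inv_length n (stransp a b \<circ> x)" using tt by simp
      then show False using h by simp
    qed
  next
    assume "(a, b) \<in> inversions n x"
    then show "inv_length n (stransp a b \<circ> x) < inv_length n x" using inv_length_stransp_comp[OF x ab] by simp
  qed
  finally show ?thesis .
qed

lemma weak_le_iff_inversions:
  assumes x: "x \<in> signed_perms n" and y: "y \<in> signed_perms n"
  shows "weak_le n x y \<longleftrightarrow> inversions n x \<subseteq> inversions n y"
proof
  assume h: "weak_le n x y"
  show "inversions n x \<subseteq> inversions n y"
  proof
    fix ab assume ab: "ab \<in> inversions n x"
    obtain a b where e: "ab = (a, b)" by fastforce
    have abV: "a \<in> pm_set n" "b \<in> pm_set n" "a < b" using ab e by (auto simp: inversions_def)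
    have "stransp a b \<in> inv_set n x" using stransp_in_inv_set_iff[OF x abV] ab e by simp
    then have "stransp a b \<in> inv_set n y" using h by (auto simp: weak_le_def)
    then show "ab \<in> inversions n y" using stransp_in_inv_set_iff[OF y abV] e by simp
  qed
next
  assume h: "inversions n x \<subseteq> inversions n y"
  show "weak_le n x y" unfolding weak_le_def
  proof
    fix t assume t: "t \<in> inv_set n x"
    then have "t \<in> reflections n" by (simp add: inv_set_def)
    then obtain a b where ab: "a \<in> pm_set n" "b \<in> pm_set n" "a < b" "t = stransp a b"
      using reflections_iff by blast
    then show "t \<in> inv_set n y" using stransp_in_inv_set_iff[OF x ab(1-3)] stransp_in_inv_set_iff[OF y ab(1-3)] h t by auto
  qed
qed

lemma inversions_neg_iff:
  assumes x: "x \<in> signed_perms n"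
  shows "(a, b) \<in> inversions n x \<longleftrightarrow> (- b, - a) \<in> inversions n x"
proof -
  have o: "inv x (- v) = - inv x v" for v using signed_perm_odd[OF inv_signed_perm[OF x]] by simp
  show ?thesis by (auto simp: inversions_def o mem_pm_set_iff)
qed

section \<open>Joins as transitive closures\<close>

definition ordered_pairs :: "nat \<Rightarrow> (int \<times> int) set" where
  "ordered_pairs n = {(a, b). a \<in> pm_set n \<and> b \<in> pm_set n \<and> a < b}"

definition cotransitive :: "nat \<Rightarrow> (int \<times> int) set \<Rightarrow> bool" where
  "cotransitive n T \<longleftrightarrow> (\<forall>a b c. (a, c) \<in> T \<longrightarrow> b \<in> pm_set n \<longrightarrow> a < b \<longrightarrow> b < c \<longrightarrow> (a, b) \<in> T \<or> (b, c) \<in> T)"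

definition neg_closed :: "(int \<times> int) set \<Rightarrow> bool" where
  "neg_closed T \<longleftrightarrow> (\<forall>a b. (a, b) \<in> T \<longrightarrow> (- b, - a) \<in> T)"

lemma inversions_ordered: "inversions n x \<subseteq> ordered_pairs n" by (auto simp: inversions_def ordered_pairs_def)

lemma trans_inversions: "trans (inversions n x)"
  by (auto simp: trans_def inversions_def)

lemma cotransitive_inversions: assumes x: "x \<in> signed_perms n" shows "cotransitive n (inversions n x)"
  unfolding cotransitive_def
proof (intro allI impI)
  fix a b c assume h: "(a, c) \<in> inversions n x" "b \<in> pm_set n" "a < b" "b < c"
  have ne: "inv x b \<noteq> inv x a"
  proof
    assume "inv x b = inv x a"
    then have "x (inv x b) = x (inv x a)" by simp
    then show False using h(3) signed_perm_apply_inv[OF x] by simp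
  qed
  show "(a, b) \<in> inversions n x \<or> (b, c) \<in> inversions n x"
  proof (cases "inv x b < inv x a")
    case True then show ?thesis using h by (auto simp: inversions_def)
  next
    case False
    then have "inv x a < inv x b" using ne by simp
    then show ?thesis using h by (auto simp: inversions_def)
  qed
qed

lemma neg_closed_inversions: "x \<in> signed_perms n \<Longrightarrow> neg_closed (inversions n x)"
  unfolding neg_closed_def using inversions_neg_iff by blast

lemma trancl_ordered_pairs1: "(a, b) \<in> R\<^sup>+ \<Longrightarrow> R \<subseteq> ordered_pairs n \<Longrightarrow> (a, b) \<in> ordered_pairs n"
  by (induction rule: trancl_induct) (auto simp: ordered_pairs_def)

lemma trancl_ordered_pairs: "R \<subseteq> ordered_pairs n \<Longrightarrow> R\<^sup>+ \<subseteq> ordered_pairs n"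
  using trancl_ordered_pairs1 by auto

lemma cotransitive_trancl:
  assumes c1: "cotransitive n R1" and c2: "cotransitive n R2" and w: "R1 \<subseteq> ordered_pairs n" "R2 \<subseteq> ordered_pairs n"
  shows "cotransitive n ((R1 \<union> R2)\<^sup>+)"
proof -
  have W: "(R1 \<union> R2)\<^sup>+ \<subseteq> ordered_pairs n" using trancl_ordered_pairs[of "R1 \<union> R2" n] w by auto
  have "(a, c) \<in> (R1 \<union> R2)\<^sup>+ \<Longrightarrow> \<forall>b. b \<in> pm_set n \<longrightarrow> a < b \<longrightarrow> b < c \<longrightarrow>
      (a, b) \<in> (R1 \<union> R2)\<^sup>+ \<or> (b, c) \<in> (R1 \<union> R2)\<^sup>+" for a c
  proof (induction rule: trancl_induct)
    case (base c)
    then show ?case using c1 c2 unfolding cotransitive_def by blast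
  next
    case (step d c)
    show ?case
    proof (intro allI impI)
      fix b assume b: "b \<in> pm_set n" "a < b" "b < c"
      have ad: "a < d" using step.hyps(1) W by (auto simp: ordered_pairs_def)
      have dc: "d < c" using step.hyps(2) w by (auto simp: ordered_pairs_def)
      consider "b < d" | "b = d" | "d < b" by linarith
      then show "(a, b) \<in> (R1 \<union> R2)\<^sup>+ \<or> (b, c) \<in> (R1 \<union> R2)\<^sup>+"
      proof cases
        case 1
        then have "(a, b) \<in> (R1 \<union> R2)\<^sup>+ \<or> (b, d) \<in> (R1 \<union> R2)\<^sup>+" using step.IH b by blast
        then show ?thesis using step.hyps(2) by (meson trancl.trancl_into_trancl)
      next
        case 2 then show ?thesis using step.hyps(1) by simp
      next
        case 3
        then have "(d, b) \<in> R1 \<union> R2 \<or> (b, c) \<in> R1 \<union> R2"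
          using step.hyps(2) c1 c2 b unfolding cotransitive_def by blast
        then show ?thesis using step.hyps(1) by (meson r_into_trancl' trancl.trancl_into_trancl)
      qed
    qed
  qed
  then show ?thesis unfolding cotransitive_def by blast
qed

lemma neg_closed_trancl:
  assumes "neg_closed R" shows "neg_closed (R\<^sup>+)"
proof -
  have "(a, c) \<in> R\<^sup>+ \<Longrightarrow> (- c, - a) \<in> R\<^sup>+" for a c
  proof (induction rule: trancl_induct)
    case (base c) then show ?case using assms by (auto simp: neg_closed_def)
  next
    case (step d c)
    have "(- c, - d) \<in> R" using step.hyps(2) assms by (auto simp: neg_closed_def)
    then show ?case using step.IH by (meson trancl_into_trancl2)
  qed
  then show ?thesis by (auto simp: neg_closed_def)
qed

lemma neg_closed_Un: "neg_closed A \<Longrightarrow> neg_closed B \<Longrightarrow> neg_closed (A \<union> B)"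
  by (auto simp: neg_closed_def)

lemma flipped_eq_pair:
  assumes x: "x \<in> signed_perms n" and i: "i < n"
    and e: "e \<in> flipped n x i" and ab: "(a, b) \<in> flipped n x i"
  shows "e = (a, b) \<or> e = (- b, - a)"
proof -
  obtain c d where cd: "e = (c, d)" by fastforce
  show ?thesis using flipped_cases[OF x i ab] flipped_cases[OF x i, of c d] e cd by auto
qed

lemma gen_swaps_if_adjacent:
  assumes PQ: "P \<in> pm_set n" "Q \<in> pm_set n" "P < Q"
    and adj: "\<And>r. r \<in> pm_set n \<Longrightarrow> \<not> (P < r \<and> r < Q)"
  shows "\<exists>i<n. gen_swaps i P Q"
proof -
  consider "1 \<le> P" | "Q \<le> -1" | "P \<le> -1" "1 \<le> Q" using PQ unfolding mem_pm_set_iff by arith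
  then show ?thesis
  proof cases
    case 1
    then have "Q = P + 1" using adj[of "P + 1"] PQ by (auto simp: mem_pm_set_iff)
    then show ?thesis using 1 PQ by (intro exI[of _ "nat P"]) (auto simp: gen_swaps_def mem_pm_set_iff)
  next
    case 2
    then have "P = Q - 1" using adj[of "Q - 1"] PQ by (auto simp: mem_pm_set_iff)
    then show ?thesis using 2 PQ by (intro exI[of _ "nat (- Q)"]) (auto simp: gen_swaps_def mem_pm_set_iff)
  next
    case 3
    then have "P = -1" "Q = 1" using adj[of "-1"] adj[of 1] PQ by (auto simp: mem_pm_set_iff)
    then show ?thesis using PQ by (intro exI[of _ 0]) (auto simp: gen_swaps_def mem_pm_set_iff)
  qed
qed

lemma adjacent_positions_flipped:
  assumes x: "x \<in> signed_perms n" and ab: "a \<in> pm_set n" "b \<in> pm_set n" "a < b"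
    and PQ: "inv x a < inv x b"
    and adj: "\<And>r. r \<in> pm_set n \<Longrightarrow> \<not> (inv x a < r \<and> r < inv x b)"
  shows "\<exists>i<n. \<not> descent x i \<and> (a, b) \<in> flipped n x i"
proof -
  have V: "inv x a \<in> pm_set n" "inv x b \<in> pm_set n"
    using signed_perm_in_iff[OF inv_signed_perm[OF x]] ab by auto
  obtain i where i: "i < n" "gen_swaps i (inv x a) (inv x b)"
    using gen_swaps_if_adjacent[OF V PQ adj] by blast
  have "(x (inv x a), x (inv x b)) \<in> flipped n x i"
    by (rule flipped_memI(1)[OF x i]) (simp add: signed_perm_apply_inv[OF x] ab(3))
  then have "(a, b) \<in> flipped n x i" by (simp add: signed_perm_apply_inv[OF x])
  moreover have "(a, b) \<notin> inversions n x" using PQ by (auto simp: inversions_def)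
  ultimately show ?thesis using flipped_in_inversions_iff[OF x i(1)] i(1) by blast
qed

lemma inv_less_of_not_inversion:
  assumes x: "x \<in> signed_perms n" and ab: "a \<in> pm_set n" "b \<in> pm_set n" "a < b"
    and "(a, b) \<notin> inversions n x"
  shows "inv x a < inv x b"
proof -
  have "inv x a \<noteq> inv x b" using ab(3) by (metis less_irrefl signed_perm_apply_inv[OF x])
  then show ?thesis using assms by (auto simp: inversions_def)
qed

text \<open>A value placed between \<open>a\<close> and \<open>b\<close> would, by transitivity and cotransitivity of \<open>T\<close>, give a
  closer pair of \<open>T\<close> that is not an inversion of \<open>x\<close>.\<close>

lemma closest_missing_pair_adjacent:
  assumes x: "x \<in> signed_perms n" and T: "T \<subseteq> ordered_pairs n" "trans T" "cotransitive n T"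
    and sub: "inversions n x \<subseteq> T" and ab: "(a, b) \<in> T - inversions n x"
    and closest: "\<And>c d. (c, d) \<in> T - inversions n x \<Longrightarrow> inv x b - inv x a \<le> inv x d - inv x c"
    and r: "r \<in> pm_set n"
  shows "\<not> (inv x a < r \<and> r < inv x b)"
proof
  assume h: "inv x a < r \<and> r < inv x b"
  define w where "w = x r"
  have wV: "w \<in> pm_set n" using r signed_perm_in_iff[OF x] by (simp add: w_def)
  have iw: "inv x w = r" using signed_perm_inv_apply[OF x] by (simp add: w_def)
  have abV: "a < b" using ab T(1) by (auto simp: ordered_pairs_def)
  have new: "(c, d) \<notin> inversions n x" if "inv x c < inv x d" for c d
    using that by (auto simp: inversions_def)
  have far: "(c, d) \<notin> T" if "inv x d - inv x c < inv x b - inv x a" "inv x c < inv x d" for c d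
    using closest[of c d] new[OF that(2)] that(1) by auto
  consider "a < w" "w < b" | "w < a" | "b < w" using h iw abV by force
  then show False
  proof cases
    case 1
    then have "(a, w) \<in> T \<or> (w, b) \<in> T" using T(3) ab wV unfolding cotransitive_def by blast
    moreover have "(a, w) \<notin> T" by (rule far) (use h iw in simp_all)
    moreover have "(w, b) \<notin> T" by (rule far) (use h iw in simp_all)
    ultimately show False by blast
  next
    case 2
    have "(w, a) \<in> inversions n x" using 2 h iw wV ab T(1) by (auto simp: inversions_def ordered_pairs_def)
    then have "(w, b) \<in> T" using sub ab T(2) by (meson DiffD1 subsetD transD)
    moreover have "(w, b) \<notin> T" by (rule far) (use h iw in simp_all)
    ultimately show False by blast
  next
    case 3
    have "(b, w) \<in> inversions n x" using 3 h iw wV ab T(1) by (auto simp: inversions_def ordered_pairs_def)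
    then have "(a, w) \<in> T" using sub ab T(2) by (meson DiffD1 subsetD transD)
    moreover have "(a, w) \<notin> T" by (rule far) (use h iw in simp_all)
    ultimately show False by blast
  qed
qed

lemma realize_step:
  assumes x: "x \<in> signed_perms n" and T: "T \<subseteq> ordered_pairs n" "trans T" "cotransitive n T" "neg_closed T"
    and sub: "inversions n x \<subseteq> T" and ne: "inversions n x \<noteq> T"
  shows "\<exists>y \<in> signed_perms n. inversions n y \<subseteq> T \<and> card (T - inversions n y) < card (T - inversions n x)"
proof -
  define M where "M = T - inversions n x"
  obtain ab0 where "ab0 \<in> M" using sub ne by (auto simp: M_def)
  define gap where "gap = (\<lambda>(a, b). nat (inv x b - inv x a))"
  obtain a b where abM: "(a, b) \<in> M" and mingap: "\<And>cd. cd \<in> M \<Longrightarrow> gap (a, b) \<le> gap cd"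
    using ex_has_least_nat[of "\<lambda>p. p \<in> M" ab0 gap] \<open>ab0 \<in> M\<close> by (metis surj_pair)
  have abV: "a \<in> pm_set n" "b \<in> pm_set n" "a < b" using abM T(1) by (auto simp: M_def ordered_pairs_def)
  have pos: "inv x c < inv x d" if "(c, d) \<in> M" for c d
    using that T(1) inv_less_of_not_inversion[OF x] by (auto simp: M_def ordered_pairs_def)
  have "inv x b - inv x a \<le> inv x d - inv x c" if "(c, d) \<in> M" for c d
    using mingap[OF that] pos[OF that] pos[OF abM] by (simp add: gap_def)
  then have adj: "\<not> (inv x a < r \<and> r < inv x b)" if "r \<in> pm_set n" for r
    using closest_missing_pair_adjacent[OF x T(1-3) sub _ _ that] abM by (simp add: M_def)
  obtain i where i: "i < n" "\<not> descent x i" "(a, b) \<in> flipped n x i"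
    using adjacent_positions_flipped[OF x abV pos[OF abM] adj] by blast
  define y where "y = x \<circ> cox_gen i"
  have y: "y \<in> signed_perms n" using x i by (simp add: y_def comp_signed_perm cox_gen_signed_perm)
  have Iy: "inversions n y = inversions n x \<union> flipped n x i"
    using inversions_comp_ascent[OF x i(1,2)] by (simp add: y_def)
  have "flipped n x i \<subseteq> T"
    using flipped_eq_pair[OF x i(1) _ i(3)] abM T(4) by (auto simp: M_def neg_closed_def)
  then have sy: "inversions n y \<subseteq> T" using Iy sub by auto
  have "T \<subseteq> pm_set n \<times> pm_set n" using T(1) by (auto simp: ordered_pairs_def)
  then have fin: "finite T" using finite_pm_set by (meson finite_SigmaI finite_subset)
  have "T - inversions n y \<subset> T - inversions n x" using Iy i(3) abM by (auto simp: M_def)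
  then have "card (T - inversions n y) < card (T - inversions n x)"
    using fin by (meson finite_Diff psubset_card_mono)
  then show ?thesis using y sy by blast
qed

lemma inversions_realize:
  assumes T: "T \<subseteq> ordered_pairs n" "trans T" "cotransitive n T" "neg_closed T"
  shows "\<exists>x \<in> signed_perms n. inversions n x = T"
proof -
  have "\<forall>x. x \<in> signed_perms n \<longrightarrow> inversions n x \<subseteq> T \<longrightarrow> card (T - inversions n x) = k \<longrightarrow>
      (\<exists>y \<in> signed_perms n. inversions n y = T)" for k
  proof (induction k rule: less_induct)
    case (less k)
    show ?case
    proof (intro allI impI)
      fix x assume x: "x \<in> signed_perms n" "inversions n x \<subseteq> T" "card (T - inversions n x) = k"
      show "\<exists>y \<in> signed_perms n. inversions n y = T"
      proof (cases "inversions n x = T")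
        case True then show ?thesis using x by blast
      next
        case False
        then obtain y where "y \<in> signed_perms n" "inversions n y \<subseteq> T" "card (T - inversions n y) < card (T - inversions n x)"
          using realize_step[OF x(1) T x(2)] by blast
        then show ?thesis using less.IH x(3) by blast
      qed
    qed
  qed
  then show ?thesis using id_signed_perm[of n] inversions_id[of n] by blast
qed

lemma inversions_join:
  assumes x: "x \<in> signed_perms n" and z: "z \<in> signed_perms n"
    and j: "is_join (signed_perms n) (weak_le n) x z m"
  shows "inversions n m = (inversions n x \<union> inversions n z)\<^sup>+"
proof -
  define T where "T = (inversions n x \<union> inversions n z)\<^sup>+"
  have m: "m \<in> signed_perms n" "weak_le n x m" "weak_le n z m" using j by (auto simp: is_join_def)
  have TW: "T \<subseteq> ordered_pairs n" unfolding T_def using inversions_ordered by (intro trancl_ordered_pairs) auto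
  have Tt: "trans T" unfolding T_def by (rule trans_trancl)
  have Tc: "cotransitive n T" unfolding T_def using cotransitive_inversions[OF x] cotransitive_inversions[OF z] inversions_ordered
    by (intro cotransitive_trancl) auto
  have Ts: "neg_closed T" unfolding T_def using neg_closed_inversions[OF x] neg_closed_inversions[OF z]
    by (intro neg_closed_trancl neg_closed_Un)
  obtain u where u: "u \<in> signed_perms n" "inversions n u = T" using inversions_realize[OF TW Tt Tc Ts] by blast
  have "inversions n x \<subseteq> T" "inversions n z \<subseteq> T" unfolding T_def by auto
  then have "weak_le n x u" "weak_le n z u" using weak_le_iff_inversions[OF x u(1)] weak_le_iff_inversions[OF z u(1)] u(2) by auto
  then have "weak_le n m u" using j u(1) by (auto simp: is_join_def)
  then have 1: "inversions n m \<subseteq> T" using weak_le_iff_inversions[OF m(1) u(1)] u(2) by auto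
  have "inversions n x \<union> inversions n z \<subseteq> inversions n m" using weak_le_iff_inversions[OF x m(1)] weak_le_iff_inversions[OF z m(1)] m by auto
  then have "T \<subseteq> (inversions n m)\<^sup>+" unfolding T_def using trancl_mono by blast
  also have "(inversions n m)\<^sup>+ = inversions n m" using trans_inversions by (rule trancl_id)
  finally show ?thesis using 1 by (simp add: T_def)
qed

definition longest :: "nat \<Rightarrow> int \<Rightarrow> int" where
  "longest n p = (if p \<in> pm_set n then - p else p)"

definition mul_longest :: "nat \<Rightarrow> (int \<Rightarrow> int) \<Rightarrow> int \<Rightarrow> int" where
  "mul_longest n x = x \<circ> longest n"

lemma longest_invol: "longest n (longest n p) = p"
  by (auto simp: longest_def mem_pm_set_iff)

lemma longest_signed_perm: "longest n \<in> signed_perms n"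
  unfolding signed_perms_def
  by (auto intro!: involution_permutes longest_invol simp: longest_def mem_pm_set_iff)

lemma mul_longest_signed_perm: "x \<in> signed_perms n \<Longrightarrow> mul_longest n x \<in> signed_perms n"
  unfolding mul_longest_def using longest_signed_perm by (rule comp_signed_perm[rotated])

lemma mul_longest_mul_longest: "mul_longest n (mul_longest n x) = x"
  by (simp add: mul_longest_def fun_eq_iff longest_invol)

lemma inv_mul_longest:
  assumes x: "x \<in> signed_perms n" and v: "v \<in> pm_set n"
  shows "inv (mul_longest n x) v = - inv x v"
proof -
  have b: "bij x" "bij (longest n)" using x longest_signed_perm permutes_bij signed_perm_permutes by blast+
  have "inv (longest n) = longest n" by (rule inv_unique_comp) (auto simp: fun_eq_iff longest_invol)
  then have "inv (mul_longest n x) = longest n \<circ> inv x" using o_inv_distrib[OF b] by (simp add: mul_longest_def)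
  moreover have "inv x v \<in> pm_set n" using v signed_perm_in_iff[OF inv_signed_perm[OF x]] by blast
  ultimately show ?thesis by (simp add: longest_def)
qed

lemma inversions_mul_longest:
  assumes x: "x \<in> signed_perms n"
  shows "inversions n (mul_longest n x) = ordered_pairs n - inversions n x"
proof (intro set_eqI)
  fix ab :: "int \<times> int"
  obtain a b where e: "ab = (a, b)" by fastforce
  show "ab \<in> inversions n (mul_longest n x) \<longleftrightarrow> ab \<in> ordered_pairs n - inversions n x"
  proof (cases "a \<in> pm_set n \<and> b \<in> pm_set n \<and> a < b")
    case True
    have "inv x a \<noteq> inv x b"
    proof
      assume "inv x a = inv x b"
      then have "x (inv x a) = x (inv x b)" by simp
      then show False using True signed_perm_apply_inv[OF x] by simp
    qed
    then show ?thesis using True e inv_mul_longest[OF x] by (auto simp: inversions_def ordered_pairs_def)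
  next
    case False then show ?thesis using e by (auto simp: inversions_def ordered_pairs_def)
  qed
qed

lemma weak_le_mul_longest:
  assumes x: "x \<in> signed_perms n" and y: "y \<in> signed_perms n"
  shows "weak_le n (mul_longest n x) (mul_longest n y) \<longleftrightarrow> weak_le n y x"
  using weak_le_iff_inversions[OF mul_longest_signed_perm[OF x] mul_longest_signed_perm[OF y]] weak_le_iff_inversions[OF y x] inversions_mul_longest[OF x] inversions_mul_longest[OF y]
    inversions_ordered[of n x] inversions_ordered[of n y] by auto

lemma is_join_mul_longest:
  assumes x: "x \<in> signed_perms n" and z: "z \<in> signed_perms n"
    and mt: "is_meet (signed_perms n) (weak_le n) x z m"
  shows "is_join (signed_perms n) (weak_le n) (mul_longest n x) (mul_longest n z) (mul_longest n m)"
proof -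
  have m: "m \<in> signed_perms n" "weak_le n m x" "weak_le n m z"
    and u: "\<And>w. w \<in> signed_perms n \<Longrightarrow> weak_le n w x \<Longrightarrow> weak_le n w z \<Longrightarrow> weak_le n w m"
    using mt by (auto simp: is_meet_def)
  show ?thesis unfolding is_join_def
  proof (intro conjI ballI impI)
    show "mul_longest n m \<in> signed_perms n" using mul_longest_signed_perm[OF m(1)] .
    show "weak_le n (mul_longest n x) (mul_longest n m)" using weak_le_mul_longest[OF x m(1)] m by simp
    show "weak_le n (mul_longest n z) (mul_longest n m)" using weak_le_mul_longest[OF z m(1)] m by simp
  next
    fix w assume w: "w \<in> signed_perms n" and h: "weak_le n (mul_longest n x) w \<and> weak_le n (mul_longest n z) w"
    have w': "mul_longest n w \<in> signed_perms n" using mul_longest_signed_perm[OF w] .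
    have "weak_le n (mul_longest n w) x" "weak_le n (mul_longest n w) z"
      using h weak_le_mul_longest[OF x w'] weak_le_mul_longest[OF z w'] by (simp_all add: mul_longest_mul_longest)
    then have "weak_le n (mul_longest n w) m" using u[OF w'] by simp
    then show "weak_le n (mul_longest n m) w" using weak_le_mul_longest[OF m(1) w'] by (simp add: mul_longest_mul_longest)
  qed
qed

section \<open>Edge conditions\<close>

text \<open>For \<open>lab = is_up v\<close>, the path \<open>\<lambda>\<^sub>k\<close> has the edge \<open>{i, j}\<close> iff all values of the early set and
  none of the late set are among the first \<open>k\<close> entries of the full notation. A set \<open>I\<close> of pairs is read
  as the inversion set of the order in which the values appear.\<close>

definition early_set :: "nat \<Rightarrow> (int \<Rightarrow> bool) \<Rightarrow> int \<Rightarrow> int \<Rightarrow> int set" where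
  "early_set n lab i j = {l \<in> pm_set n. (i < l \<and> l < j \<and> \<not> lab l) \<or> ((l = i \<or> l = j) \<and> lab l)}"

definition late_set :: "nat \<Rightarrow> (int \<Rightarrow> bool) \<Rightarrow> int \<Rightarrow> int \<Rightarrow> int set" where
  "late_set n lab i j = {l \<in> pm_set n. (i < l \<and> l < j \<and> lab l) \<or> ((l = i \<or> l = j) \<and> \<not> lab l)}"

definition placed_before :: "(int \<times> int) set \<Rightarrow> int \<Rightarrow> int \<Rightarrow> bool" where
  "placed_before I p q \<longleftrightarrow> (p < q \<and> (p, q) \<notin> I) \<or> (q < p \<and> (q, p) \<in> I)"

definition early_before_late :: "nat \<Rightarrow> (int \<Rightarrow> bool) \<Rightarrow> int \<Rightarrow> int \<Rightarrow> (int \<times> int) set \<Rightarrow> bool" where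
  "early_before_late n lab i j I \<longleftrightarrow> (\<forall>p \<in> early_set n lab i j. \<forall>q \<in> late_set n lab i j. placed_before I p q)"

definition same_edges :: "nat \<Rightarrow> (int \<Rightarrow> bool) \<Rightarrow> (int set \<Rightarrow> bool) \<Rightarrow> (int \<Rightarrow> int) \<Rightarrow> (int \<Rightarrow> int) \<Rightarrow> bool" where
  "same_edges n lab diag x y \<longleftrightarrow> (\<forall>i j. i < j \<longrightarrow> i \<in> pm_set (Suc n) \<longrightarrow> j \<in> pm_set (Suc n) \<longrightarrow>
      diag {i, j} \<longrightarrow> (early_before_late n lab i j (inversions n x) \<longleftrightarrow> early_before_late n lab i j (inversions n y)))"

lemma placed_before_inversions:
  assumes x: "x \<in> signed_perms n" and pq: "p \<in> pm_set n" "q \<in> pm_set n" "p \<noteq> q"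
  shows "placed_before (inversions n x) p q \<longleftrightarrow> inv x p < inv x q"
proof -
  have "inv x p \<noteq> inv x q"
  proof
    assume "inv x p = inv x q"
    then have "x (inv x p) = x (inv x q)" by simp
    then show False using pq signed_perm_apply_inv[OF x] by simp
  qed
  then show ?thesis using pq by (auto simp: placed_before_def inversions_def)
qed

lemma early_set_neg: "early_set n (\<lambda>u. \<not> lab u) i j = late_set n lab i j"
  by (auto simp: early_set_def late_set_def)

lemma late_set_neg: "late_set n (\<lambda>u. \<not> lab u) i j = early_set n lab i j"
  by (auto simp: early_set_def late_set_def)

lemma early_before_late_mul_longest:
  assumes x: "x \<in> signed_perms n"
  shows "early_before_late n (\<lambda>u. \<not> lab u) i j (inversions n (mul_longest n x)) \<longleftrightarrow> early_before_late n lab i j (inversions n x)"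
proof -
  have b: "placed_before (inversions n (mul_longest n x)) p q \<longleftrightarrow> placed_before (inversions n x) q p"
    if "p \<in> pm_set n" "q \<in> pm_set n" "p \<noteq> q" for p q
    using placed_before_inversions[OF mul_longest_signed_perm[OF x] that] placed_before_inversions[OF x that(2,1)] that(3) inv_mul_longest[OF x that(1)] inv_mul_longest[OF x that(2)]
    by auto
  have "early_before_late n (\<lambda>u. \<not> lab u) i j (inversions n (mul_longest n x)) \<longleftrightarrow>
      (\<forall>p \<in> late_set n lab i j. \<forall>q \<in> early_set n lab i j. placed_before (inversions n (mul_longest n x)) p q)"
    by (simp add: early_before_late_def early_set_neg late_set_neg)
  also have "\<dots> \<longleftrightarrow> (\<forall>p \<in> late_set n lab i j. \<forall>q \<in> early_set n lab i j. placed_before (inversions n x) q p)"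
  proof -
    have "p \<in> late_set n lab i j \<Longrightarrow> q \<in> early_set n lab i j \<Longrightarrow> placed_before (inversions n (mul_longest n x)) p q \<longleftrightarrow> placed_before (inversions n x) q p" for p q
      using b[of p q] by (auto simp: early_set_def late_set_def)
    then show ?thesis by blast
  qed
  also have "\<dots> \<longleftrightarrow> early_before_late n lab i j (inversions n x)" by (auto simp: early_before_late_def)
  finally show ?thesis .
qed

lemma same_edges_mul_longest:
  assumes x: "x \<in> signed_perms n" and y: "y \<in> signed_perms n"
  shows "same_edges n (\<lambda>u. \<not> lab u) diag (mul_longest n x) (mul_longest n y) \<longleftrightarrow> same_edges n lab diag x y"
  using early_before_late_mul_longest[OF x] early_before_late_mul_longest[OF y] by (simp add: same_edges_def)

lemma mem_early_late_between:
  assumes "b \<in> pm_set n" "i \<le> p" "p < b" "b < q" "q \<le> j"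
  shows "lab b \<Longrightarrow> b \<in> late_set n lab i j" "\<not> lab b \<Longrightarrow> b \<in> early_set n lab i j"
  using assms by (auto simp: early_set_def late_set_def)

lemma early_late_bounds:
  assumes "i \<le> j" "p \<in> early_set n lab i j" "q \<in> late_set n lab i j"
  shows "i \<le> p" "p \<le> j" "i \<le> q" "q \<le> j" "p \<noteq> q"
  using assms by (auto simp: early_set_def late_set_def)

text \<open>The hypothesis \<open>new\<close> says that each pair added to \<open>I\<close> is bridged by a value \<open>b\<close> whose own order
  relations to the two ends do not change; such a \<open>b\<close> is itself early or late and so blocks any change of
  the edge condition.\<close>

lemma early_before_late_subset:
  assumes sub: "I \<subseteq> I'" and ij: "i \<le> j"
    and new: "\<And>l e. (l, e) \<in> I' \<Longrightarrow> (l, e) \<notin> I \<Longrightarrow> \<exists>b \<in> pm_set n. l < b \<and> b < e \<and>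
       ((lab b \<and> (l, b) \<in> I \<and> (b, e) \<notin> I') \<or> (\<not> lab b \<and> (l, b) \<notin> I' \<and> (b, e) \<in> I))"
    and E': "early_before_late n lab i j I'"
  shows "early_before_late n lab i j I"
  unfolding early_before_late_def
proof (intro ballI)
  fix p q assume p: "p \<in> early_set n lab i j" and q: "q \<in> late_set n lab i j"
  note rng = early_late_bounds[OF ij p q]
  have before': "placed_before I' p q" using E' p q by (simp add: early_before_late_def)
  show "placed_before I p q"
  proof (rule ccontr)
    assume "\<not> placed_before I p q"
    then have "(q, p) \<in> I'" "(q, p) \<notin> I" using before' sub rng(5) by (auto simp: placed_before_def)
    then obtain b where b: "b \<in> pm_set n" "q < b" "b < p"
      "(lab b \<and> (q, b) \<in> I \<and> (b, p) \<notin> I') \<or> (\<not> lab b \<and> (q, b) \<notin> I' \<and> (b, p) \<in> I)"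
      using new by blast
    show False
    proof (cases "lab b")
      case True
      then have "placed_before I' p b"
        using E' p mem_early_late_between(1)[OF b(1) rng(3) b(2,3) rng(2)] by (simp add: early_before_late_def)
      then show False using b True by (auto simp: placed_before_def)
    next
      case False
      then have "placed_before I' b q"
        using E' q mem_early_late_between(2)[OF b(1) rng(3) b(2,3) rng(2)] by (simp add: early_before_late_def)
      then show False using b False by (auto simp: placed_before_def)
    qed
  qed
qed

lemma early_before_late_superset:
  assumes sub: "I \<subseteq> I'" and ij: "i \<le> j"
    and new: "\<And>l e. (l, e) \<in> I' \<Longrightarrow> (l, e) \<notin> I \<Longrightarrow> \<exists>b \<in> pm_set n. l < b \<and> b < e \<and>
       ((lab b \<and> (l, b) \<in> I \<and> (b, e) \<notin> I') \<or> (\<not> lab b \<and> (l, b) \<notin> I' \<and> (b, e) \<in> I))"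
    and E: "early_before_late n lab i j I"
  shows "early_before_late n lab i j I'"
  unfolding early_before_late_def
proof (intro ballI)
  fix p q assume p: "p \<in> early_set n lab i j" and q: "q \<in> late_set n lab i j"
  note rng = early_late_bounds[OF ij p q]
  have before: "placed_before I p q" using E p q by (simp add: early_before_late_def)
  show "placed_before I' p q"
  proof (rule ccontr)
    assume "\<not> placed_before I' p q"
    then have "(p, q) \<in> I'" "(p, q) \<notin> I" using before sub rng(5) by (auto simp: placed_before_def)
    then obtain b where b: "b \<in> pm_set n" "p < b" "b < q"
      "(lab b \<and> (p, b) \<in> I \<and> (b, q) \<notin> I') \<or> (\<not> lab b \<and> (p, b) \<notin> I' \<and> (b, q) \<in> I)"
      using new by blast
    show False
    proof (cases "lab b")
      case True
      then have "placed_before I p b"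
        using E p mem_early_late_between(1)[OF b(1) rng(1) b(2,3) rng(4)] by (simp add: early_before_late_def)
      then show False using b True by (auto simp: placed_before_def)
    next
      case False
      then have "placed_before I b q"
        using E q mem_early_late_between(2)[OF b(1) rng(1) b(2,3) rng(4)] by (simp add: early_before_late_def)
      then show False using b False by (auto simp: placed_before_def)
    qed
  qed
qed

lemma early_before_late_extend_iff:
  assumes "I \<subseteq> I'" and "i \<le> j"
    and "\<And>l e. (l, e) \<in> I' \<Longrightarrow> (l, e) \<notin> I \<Longrightarrow> \<exists>b \<in> pm_set n. l < b \<and> b < e \<and>
       ((lab b \<and> (l, b) \<in> I \<and> (b, e) \<notin> I') \<or> (\<not> lab b \<and> (l, b) \<notin> I' \<and> (b, e) \<in> I))"
  shows "early_before_late n lab i j I' \<longleftrightarrow> early_before_late n lab i j I"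
  using early_before_late_subset[OF assms] early_before_late_superset[OF assms] by blast

definition fn_pos :: "nat \<Rightarrow> nat \<Rightarrow> int" where
  "fn_pos n k = (if k < n then int k - int n else int k - int n + 1)"

text \<open>The (0-based) index of the value \<open>l\<close> in the full notation of \<open>x\<close>.\<close>

definition fn_rank :: "nat \<Rightarrow> (int \<Rightarrow> int) \<Rightarrow> int \<Rightarrow> int" where
  "fn_rank n x l = (if inv x l < 0 then inv x l + int n else inv x l + int n - 1)"

lemma full_notation_nth:
  assumes k: "k < 2 * n"
  shows "full_notation n x ! k = x (fn_pos n k)"
proof -
  have l1: "length [- int n..-1] = n" by simp
  show ?thesis
  proof (cases "k < n")
    case True
    have "[- int n..-1] ! k = - int n + int k" using True by (intro nth_upto) simp
    then show ?thesis using True l1 by (simp add: full_notation_def nth_append fn_pos_def)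
  next
    case False
    have "[1..int n] ! (k - n) = 1 + int (k - n)" using False k by (intro nth_upto) simp
    moreover have "1 + int (k - n) = int k - int n + 1" using False by simp
    ultimately show ?thesis using False l1 k by (simp add: full_notation_def nth_append fn_pos_def ac_simps)
  qed
qed

lemma fn_pos_in: "k < 2 * n \<Longrightarrow> fn_pos n k \<in> pm_set n"
  by (auto simp: fn_pos_def mem_pm_set_iff)

lemma fn_rank_range:
  assumes x: "x \<in> signed_perms n" and l: "l \<in> pm_set n"
  shows "0 \<le> fn_rank n x l \<and> fn_rank n x l < 2 * int n"
proof -
  have "inv x l \<in> pm_set n" using signed_perm_in_iff[OF inv_signed_perm[OF x]] l by blast
  then show ?thesis by (auto simp: fn_rank_def mem_pm_set_iff)
qed

lemma fn_rank_less_iff: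
  assumes x: "x \<in> signed_perms n" and pq: "p \<in> pm_set n" "q \<in> pm_set n"
  shows "fn_rank n x p < fn_rank n x q \<longleftrightarrow> inv x p < inv x q"
proof -
  have "inv x p \<in> pm_set n" "inv x q \<in> pm_set n" using signed_perm_in_iff[OF inv_signed_perm[OF x]] pq by blast+
  then show ?thesis by (auto simp: fn_rank_def mem_pm_set_iff)
qed

lemma fn_rank_eq_iff:
  assumes x: "x \<in> signed_perms n" and l: "l \<in> pm_set n" and k: "k < 2 * n"
  shows "fn_rank n x l = int k \<longleftrightarrow> l = x (fn_pos n k)"
proof -
  have il: "inv x l \<in> pm_set n" using signed_perm_in_iff[OF inv_signed_perm[OF x]] l by blast
  have "l = x (fn_pos n k) \<longleftrightarrow> inv x l = fn_pos n k" using signed_perm_inv_apply[OF x] signed_perm_apply_inv[OF x] by metis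
  also have "\<dots> \<longleftrightarrow> fn_rank n x l = int k" using il k by (auto simp: fn_rank_def fn_pos_def mem_pm_set_iff)
  finally show ?thesis by simp
qed

lemma lam_path_mem_iff:
  assumes x: "x \<in> signed_perms n"
  shows "k \<le> 2 * n \<Longrightarrow> l \<in> lam_path n v x k \<longleftrightarrow>
    l = - int n - 1 \<or> l = int n + 1 \<or> (l \<in> pm_set n \<and> (is_up v l \<longleftrightarrow> fn_rank n x l < int k))"
proof (induction k arbitrary: l)
  case 0
  have "l \<in> pm_set n \<Longrightarrow> 0 \<le> fn_rank n x l" using fn_rank_range[OF x] by blast
  then show ?case by auto
next
  case (Suc k)
  have k: "k < 2 * n" using Suc.prems by simp
  define y where "y = full_notation n x ! k"
  have y: "y = x (fn_pos n k)" using full_notation_nth[OF k] by (simp add: y_def)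
  have yV: "y \<in> pm_set n" using y fn_pos_in[OF k] signed_perm_in_iff[OF x] by blast
  have ryk: "fn_rank n x y = int k" using fn_rank_eq_iff[OF x yV k] y by simp
  have IH: "l \<in> lam_path n v x k \<longleftrightarrow>
    l = - int n - 1 \<or> l = int n + 1 \<or> (l \<in> pm_set n \<and> (is_up v l \<longleftrightarrow> fn_rank n x l < int k))"
    using Suc.IH Suc.prems by simp
  have ends: "y \<noteq> - int n - 1" "y \<noteq> int n + 1" using yV by (auto simp: mem_pm_set_iff)
  show ?case
  proof (cases "l = y")
    case True
    then show ?thesis using ends yV ryk by (auto simp: Let_def y_def[symmetric])
  next
    case False
    have "l \<in> pm_set n \<Longrightarrow> fn_rank n x l \<noteq> int k" using fn_rank_eq_iff[OF x _ k] False y by blast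
    then have "l \<in> pm_set n \<Longrightarrow> (fn_rank n x l < int (Suc k) \<longleftrightarrow> fn_rank n x l < int k)" by auto
    then show ?thesis using IH False by (auto simp: Let_def y_def[symmetric])
  qed
qed

lemma path_edges_iff:
  assumes "i < j"
  shows "{i, j} \<in> path_edges S \<longleftrightarrow> i \<in> S \<and> j \<in> S \<and> (\<forall>k\<in>S. \<not> (i < k \<and> k < j))"
proof
  assume "{i, j} \<in> path_edges S"
  then obtain i' j' where h: "{i, j} = {i', j'}" "i' \<in> S" "j' \<in> S" "i' < j'" "\<forall>k\<in>S. \<not> (i' < k \<and> k < j')"
    by (auto simp: path_edges_def)
  then have "i = i' \<and> j = j'" using assms by (auto simp: doubleton_eq_iff)
  then show "i \<in> S \<and> j \<in> S \<and> (\<forall>k\<in>S. \<not> (i < k \<and> k < j))" using h by auto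
next
  assume "i \<in> S \<and> j \<in> S \<and> (\<forall>k\<in>S. \<not> (i < k \<and> k < j))"
  then show "{i, j} \<in> path_edges S" using assms by (auto simp: path_edges_def)
qed

lemma separating_threshold:
  fixes f :: "'a \<Rightarrow> int" and N :: nat
  assumes "finite E" and less: "\<And>p q. p \<in> E \<Longrightarrow> q \<in> L \<Longrightarrow> f p < f q"
    and range: "\<And>p. p \<in> E \<Longrightarrow> 0 \<le> f p \<and> f p < int N" and nonneg: "\<And>q. q \<in> L \<Longrightarrow> 0 \<le> f q"
  shows "\<exists>k \<le> N. (\<forall>p \<in> E. f p < int k) \<and> (\<forall>q \<in> L. int k \<le> f q)"
proof (cases "E = {}")
  case True
  then show ?thesis using nonneg by (intro exI[of _ 0]) auto
next
  case False
  define m where "m = Max (f ` E)"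
  have "m \<in> f ` E" using False assms(1) by (simp add: m_def)
  then have m: "0 \<le> m" "m < int N" using range by auto
  have "\<forall>p \<in> E. f p \<le> m" using assms(1) by (simp add: m_def)
  moreover have "\<forall>q \<in> L. m < f q" using \<open>m \<in> f ` E\<close> less by auto
  ultimately show ?thesis using m by (intro exI[of _ "nat (m + 1)"]) auto
qed

lemma path_edge_lam_path_imp:
  assumes x: "x \<in> signed_perms n" and k: "k \<le> 2 * n"
    and ij: "i < j" "i \<in> pm_set (Suc n)" "j \<in> pm_set (Suc n)"
    and edge: "{i, j} \<in> path_edges (lam_path n v x k)"
  shows "\<forall>p \<in> early_set n (is_up v) i j. fn_rank n x p < int k"
    "\<forall>q \<in> late_set n (is_up v) i j. int k \<le> fn_rank n x q"
proof -
  note M = lam_path_mem_iff[OF x k]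
  have h: "i \<in> lam_path n v x k" "j \<in> lam_path n v x k" "\<forall>l \<in> lam_path n v x k. \<not> (i < l \<and> l < j)"
    using edge path_edges_iff[OF ij(1)] by auto
  show "\<forall>p \<in> early_set n (is_up v) i j. fn_rank n x p < int k"
  proof
    fix p assume p: "p \<in> early_set n (is_up v) i j"
    have pV: "p \<in> pm_set n" using p by (simp add: early_set_def)
    from p consider "i < p" "p < j" "\<not> is_up v p" | "p = i \<or> p = j" "is_up v p"
      by (auto simp: early_set_def)
    then show "fn_rank n x p < int k"
    proof cases
      case 1 then have "p \<notin> lam_path n v x k" using h(3) by blast
      then show ?thesis using M[of p] pV 1 by auto
    next
      case 2 then have "p \<in> lam_path n v x k" using h by blast
      then show ?thesis using M[of p] pV 2 by (auto simp: mem_pm_set_iff)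
    qed
  qed
  show "\<forall>q \<in> late_set n (is_up v) i j. int k \<le> fn_rank n x q"
  proof
    fix q assume q: "q \<in> late_set n (is_up v) i j"
    have qV: "q \<in> pm_set n" using q by (simp add: late_set_def)
    from q consider "i < q" "q < j" "is_up v q" | "q = i \<or> q = j" "\<not> is_up v q"
      by (auto simp: late_set_def)
    then show "int k \<le> fn_rank n x q"
    proof cases
      case 1 then have "q \<notin> lam_path n v x k" using h(3) by blast
      then show ?thesis using M[of q] qV 1 by auto
    next
      case 2 then have "q \<in> lam_path n v x k" using h by blast
      then show ?thesis using M[of q] qV 2 by (auto simp: mem_pm_set_iff)
    qed
  qed
qed

lemma path_edge_lam_pathI:
  assumes x: "x \<in> signed_perms n" and k: "k \<le> 2 * n"
    and ij: "i < j" "i \<in> pm_set (Suc n)" "j \<in> pm_set (Suc n)"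
    and early: "\<And>p. p \<in> early_set n (is_up v) i j \<Longrightarrow> fn_rank n x p < int k"
    and late: "\<And>q. q \<in> late_set n (is_up v) i j \<Longrightarrow> int k \<le> fn_rank n x q"
  shows "{i, j} \<in> path_edges (lam_path n v x k)"
proof -
  note M = lam_path_mem_iff[OF x k]
  have ends: "l \<in> lam_path n v x k" if "l = i \<or> l = j" for l
  proof (cases "l \<in> pm_set n")
    case True
    then show ?thesis using early[of l] late[of l] that M[of l]
      by (cases "is_up v l") (auto simp: early_set_def late_set_def)
  next
    case False
    then show ?thesis using that ij M[of l] by (auto simp: mem_pm_set_iff)
  qed
  have gap: "\<not> (i < l \<and> l < j)" if "l \<in> lam_path n v x k" for l
  proof
    assume il: "i < l \<and> l < j"
    then have "l \<in> pm_set n" "is_up v l \<longleftrightarrow> fn_rank n x l < int k"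
      using M[of l] that ij by (auto simp: mem_pm_set_iff)
    then show False using early[of l] late[of l] il
      by (cases "is_up v l") (auto simp: early_set_def late_set_def)
  qed
  show "{i, j} \<in> path_edges (lam_path n v x k)" using path_edges_iff[OF ij(1)] ends gap by blast
qed

lemma path_edge_lam_path_iff:
  assumes x: "x \<in> signed_perms n" and k: "k \<le> 2 * n"
    and ij: "i < j" "i \<in> pm_set (Suc n)" "j \<in> pm_set (Suc n)"
  shows "{i, j} \<in> path_edges (lam_path n v x k) \<longleftrightarrow>
    (\<forall>p \<in> early_set n (is_up v) i j. fn_rank n x p < int k) \<and>
    (\<forall>q \<in> late_set n (is_up v) i j. int k \<le> fn_rank n x q)"
proof
  assume "{i, j} \<in> path_edges (lam_path n v x k)"
  then show "(\<forall>p \<in> early_set n (is_up v) i j. fn_rank n x p < int k) \<and>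
    (\<forall>q \<in> late_set n (is_up v) i j. int k \<le> fn_rank n x q)"
    using path_edge_lam_path_imp[OF x k ij] by simp
next
  assume "(\<forall>p \<in> early_set n (is_up v) i j. fn_rank n x p < int k) \<and>
    (\<forall>q \<in> late_set n (is_up v) i j. int k \<le> fn_rank n x q)"
  then show "{i, j} \<in> path_edges (lam_path n v x k)" by (intro path_edge_lam_pathI[OF x k ij]) auto
qed

lemma path_edge_iff_early_before_late:
  assumes x: "x \<in> signed_perms n" and ij: "i < j" "i \<in> pm_set (Suc n)" "j \<in> pm_set (Suc n)"
  shows "(\<exists>k \<le> 2 * n. {i, j} \<in> path_edges (lam_path n v x k)) \<longleftrightarrow>
    early_before_late n (is_up v) i j (inversions n x)"
proof -
  define E where "E = early_set n (is_up v) i j"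
  define L where "L = late_set n (is_up v) i j"
  have EL: "E \<subseteq> pm_set n" "L \<subseteq> pm_set n" "E \<inter> L = {}"
    by (auto simp: E_def L_def early_set_def late_set_def)
  have "(\<exists>k \<le> 2 * n. {i, j} \<in> path_edges (lam_path n v x k)) \<longleftrightarrow>
      (\<exists>k \<le> 2 * n. (\<forall>p \<in> E. fn_rank n x p < int k) \<and> (\<forall>q \<in> L. int k \<le> fn_rank n x q))"
    using path_edge_lam_path_iff[OF x _ ij] by (simp add: E_def L_def cong: conj_cong)
  also have "\<dots> \<longleftrightarrow> (\<forall>p \<in> E. \<forall>q \<in> L. fn_rank n x p < fn_rank n x q)"
  proof
    assume sep: "\<forall>p \<in> E. \<forall>q \<in> L. fn_rank n x p < fn_rank n x q"
    have "finite E" using EL(1) finite_pm_set finite_subset by blast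
    then show "\<exists>k \<le> 2 * n. (\<forall>p \<in> E. fn_rank n x p < int k) \<and> (\<forall>q \<in> L. int k \<le> fn_rank n x q)"
      by (rule separating_threshold) (use sep fn_rank_range[OF x] EL in auto)
  qed fastforce
  also have "\<dots> \<longleftrightarrow> early_before_late n (is_up v) i j (inversions n x)"
  proof -
    have "placed_before (inversions n x) p q \<longleftrightarrow> fn_rank n x p < fn_rank n x q" if "p \<in> E" "q \<in> L" for p q
    proof -
      have "p \<in> pm_set n" "q \<in> pm_set n" "p \<noteq> q" using EL that by auto
      then show ?thesis using placed_before_inversions[OF x] fn_rank_less_iff[OF x] by simp
    qed
    then show ?thesis unfolding early_before_late_def E_def[symmetric] L_def[symmetric] by blast
  qed
  finally show ?thesis .
qed

lemma lam_path_subset: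
  assumes x: "x \<in> signed_perms n" and k: "k \<le> 2 * n"
  shows "lam_path n v x k \<subseteq> pm_set (Suc n)"
  using lam_path_mem_iff[OF x k, of _ v] by (auto simp: mem_pm_set_iff)

lemma etaB_eq:
  assumes x: "x \<in> signed_perms n"
  shows "etaB n v x = {d. is_diagonal n v d \<and> (\<exists>i j. d = {i, j} \<and> i < j \<and> i \<in> pm_set (Suc n) \<and>
     j \<in> pm_set (Suc n) \<and> early_before_late n (is_up v) i j (inversions n x))}"
proof (intro set_eqI iffI)
  fix d assume "d \<in> etaB n v x"
  then obtain k where dk: "is_diagonal n v d" "k \<le> 2 * n" "d \<in> path_edges (lam_path n v x k)"
    by (auto simp: etaB_def)
  then obtain i j where ij: "d = {i, j}" "i \<in> lam_path n v x k" "j \<in> lam_path n v x k" "i < j"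
    by (auto simp: path_edges_def)
  have V: "i \<in> pm_set (Suc n)" "j \<in> pm_set (Suc n)" using lam_path_subset[OF x dk(2)] ij by auto
  have "early_before_late n (is_up v) i j (inversions n x)" using path_edge_iff_early_before_late[OF x ij(4) V, of v] dk ij by blast
  then show "d \<in> {d. is_diagonal n v d \<and> (\<exists>i j. d = {i, j} \<and> i < j \<and> i \<in> pm_set (Suc n) \<and>
     j \<in> pm_set (Suc n) \<and> early_before_late n (is_up v) i j (inversions n x))}" using dk(1) ij V by blast
next
  fix d assume "d \<in> {d. is_diagonal n v d \<and> (\<exists>i j. d = {i, j} \<and> i < j \<and> i \<in> pm_set (Suc n) \<and>
     j \<in> pm_set (Suc n) \<and> early_before_late n (is_up v) i j (inversions n x))}"
  then obtain i j where h: "is_diagonal n v d" "d = {i, j}" "i < j" "i \<in> pm_set (Suc n)"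
     "j \<in> pm_set (Suc n)" "early_before_late n (is_up v) i j (inversions n x)" by blast
  then show "d \<in> etaB n v x" using path_edge_iff_early_before_late[OF x h(3-5), of v] by (auto simp: etaB_def)
qed

lemma etaB_eq_iff_same_edges:
  assumes x: "x \<in> signed_perms n" and y: "y \<in> signed_perms n"
  shows "etaB n v x = etaB n v y \<longleftrightarrow> same_edges n (is_up v) (is_diagonal n v) x y"
proof
  assume e: "etaB n v x = etaB n v y"
  show "same_edges n (is_up v) (is_diagonal n v) x y" unfolding same_edges_def
  proof (intro allI impI)
    fix i j assume ij: "i < j" "i \<in> pm_set (Suc n)" "j \<in> pm_set (Suc n)" "is_diagonal n v {i, j}"
    have k: "early_before_late n (is_up v) i j (inversions n z) \<longleftrightarrow> {i, j} \<in> etaB n v z" if z: "z \<in> signed_perms n" for z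
    proof
      assume "early_before_late n (is_up v) i j (inversions n z)"
      then show "{i, j} \<in> etaB n v z" using etaB_eq[OF z, of v] ij by blast
    next
      assume "{i, j} \<in> etaB n v z"
      then obtain i' j' where h: "{i, j} = {i', j'}" "i' < j'" "early_before_late n (is_up v) i' j' (inversions n z)"
        using etaB_eq[OF z, of v] by blast
      then have "i = i' \<and> j = j'" using ij(1) by (auto simp: doubleton_eq_iff)
      then show "early_before_late n (is_up v) i j (inversions n z)" using h by simp
    qed
    show "early_before_late n (is_up v) i j (inversions n x) \<longleftrightarrow> early_before_late n (is_up v) i j (inversions n y)"
      using k[OF x] k[OF y] e by simp
  qed
next
  assume same: "same_edges n (is_up v) (is_diagonal n v) x y"
  show "etaB n v x = etaB n v y"
    unfolding etaB_eq[OF x] etaB_eq[OF y]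
    using same unfolding same_edges_def by blast
qed

definition swap_witness :: "(int \<Rightarrow> bool) \<Rightarrow> (int \<times> int) set \<Rightarrow> int \<Rightarrow> int \<Rightarrow> int \<Rightarrow> bool" where
  "swap_witness lab I a b c \<longleftrightarrow> (lab b \<and> (a, b) \<in> I \<and> (b, c) \<notin> I) \<or> (\<not> lab b \<and> (a, b) \<notin> I \<and> (b, c) \<in> I)"

lemma trancl_insert_trans:
  assumes "trans I"
  shows "(I \<union> {(a, c)})\<^sup>+ = I \<union> {(l, e). (l = a \<or> (l, a) \<in> I) \<and> (e = c \<or> (c, e) \<in> I)}"
  using trancl_insert2[of a c I] trancl_id[OF assms] by auto

lemma swap_witness_bridges:
  assumes t: "trans I" and W: "I \<subseteq> ordered_pairs n"
    and b: "b \<in> pm_set n" "a < b" "b < c" and w: "swap_witness lab I a b c"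
    and le: "(l, e) \<in> (I \<union> {(a, c)})\<^sup>+" "(l, e) \<notin> I"
  shows "\<exists>b \<in> pm_set n. l < b \<and> b < e \<and>
    ((lab b \<and> (l, b) \<in> I \<and> (b, e) \<notin> (I \<union> {(a, c)})\<^sup>+) \<or>
     (\<not> lab b \<and> (l, b) \<notin> (I \<union> {(a, c)})\<^sup>+ \<and> (b, e) \<in> I))"
proof -
  note N = trancl_insert_trans[OF t, of a c]
  have lt: "(u, v) \<in> I \<Longrightarrow> u < v" for u v using W by (auto simp: ordered_pairs_def)
  have tr: "(u, v) \<in> I \<Longrightarrow> (v, z) \<in> I \<Longrightarrow> (u, z) \<in> I" for u v z using t by (meson transD)
  have A: "l = a \<or> (l, a) \<in> I" and C: "e = c \<or> (c, e) \<in> I" using le N by auto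
  have lb: "l < b" using A lt b(2) by force
  have be: "b < e" using C lt b(3) by force
  show ?thesis
  proof (cases "lab b")
    case True
    then have ab: "(a, b) \<in> I" "(b, c) \<notin> I" using w by (auto simp: swap_witness_def)
    have "(l, b) \<in> I" using A ab tr by blast
    moreover have "(b, e) \<notin> I" using A ab tr le(2) by blast
    then have "(b, e) \<notin> (I \<union> {(a, c)})\<^sup>+" using N b(2) lt by force
    ultimately show ?thesis using True b(1) lb be by blast
  next
    case False
    then have ab: "(a, b) \<notin> I" "(b, c) \<in> I" using w by (auto simp: swap_witness_def)
    have "(l, b) \<notin> I" using C ab tr le(2) by blast
    then have "(l, b) \<notin> (I \<union> {(a, c)})\<^sup>+" using N b(3) lt ab(1) A by force
    moreover have "(b, e) \<in> I" using C ab tr by blast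
    ultimately show ?thesis using False b(1) lb be by blast
  qed
qed

lemma early_before_late_insert:
  assumes t: "trans I" and W: "I \<subseteq> ordered_pairs n"
    and b: "b \<in> pm_set n" "a < b" "b < c" and w: "swap_witness lab I a b c" and ij: "i \<le> j"
  shows "early_before_late n lab i j ((I \<union> {(a, c)})\<^sup>+) \<longleftrightarrow> early_before_late n lab i j I"
proof (rule early_before_late_extend_iff[OF _ ij])
  show "I \<subseteq> (I \<union> {(a, c)})\<^sup>+" by auto
qed (rule swap_witness_bridges[OF t W b w])

lemma mem_trancl_insert_bounds:
  assumes t: "trans I" and W: "I \<subseteq> ordered_pairs n"
    and uw: "(u, w) \<in> (I \<union> {(a, c)})\<^sup>+" "(u, w) \<notin> I"
  shows "u \<le> a" "c \<le> w"
proof -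
  have lt: "(p, q) \<in> I \<Longrightarrow> p < q" for p q using W by (auto simp: ordered_pairs_def)
  have "(u = a \<or> (u, a) \<in> I) \<and> (w = c \<or> (c, w) \<in> I)" using uw trancl_insert_trans[OF t] by auto
  then show "u \<le> a" "c \<le> w" using lt by force+
qed

definition gen_values :: "(int \<Rightarrow> int) \<Rightarrow> nat \<Rightarrow> int \<times> int" where
  "gen_values x i = (if i = 0 then (- \<bar>x 1\<bar>, \<bar>x 1\<bar>) else (min (x i) (x (int i + 1)), max (x i) (x (int i + 1))))"

lemma flipped_gen_values:
  assumes x: "x \<in> signed_perms n" and i: "i < n" and e: "gen_values x i = (a, c)"
  shows "flipped n x i = {(a, c), (- c, - a)}"
proof
  show "flipped n x i \<subseteq> {(a, c), (- c, - a)}"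
  proof
    fix p assume p: "p \<in> flipped n x i"
    obtain u v where uv: "p = (u, v)" by fastforce
    show "p \<in> {(a, c), (- c, - a)}"
      using flipped_cases[OF x i, of u v] p uv e by (auto simp: gen_values_def split: if_splits)
  qed
next
  show "{(a, c), (- c, - a)} \<subseteq> flipped n x i"
  proof (cases "i = 0")
    case True
    then show ?thesis using flipped_elems(1)[OF x i] e by (auto simp: gen_values_def)
  next
    case False
    then show ?thesis using flipped_elems(2,3)[OF x i] e by (auto simp: gen_values_def)
  qed
qed

lemma gen_values_ordered:
  assumes x: "x \<in> signed_perms n" and i: "i < n" and e: "gen_values x i = (a, c)"
  shows "a \<in> pm_set n" "c \<in> pm_set n" "a < c"
proof -
  have "(a, c) \<in> flipped n x i" using flipped_gen_values[OF x i e] by auto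
  then show "a \<in> pm_set n" "c \<in> pm_set n" "a < c" by (auto simp: flipped_def)
qed

lemma gen_values_positions:
  assumes x: "x \<in> signed_perms n" and i: "i < n" and e: "gen_values x i = (a, c)"
  shows "(a = x (gen_lo i) \<and> c = x (gen_hi i)) \<or> (a = x (gen_hi i) \<and> c = x (gen_lo i))"
proof (cases "i = 0")
  case True
  have f: "x (- 1) = - x 1" using signed_perm_facts0[OF x] i True by auto
  then show ?thesis using e True by (auto simp: gen_values_def gen_lo_def gen_hi_def abs_if)
next
  case False
  then show ?thesis using e by (auto simp: gen_values_def gen_lo_def gen_hi_def min_def max_def split: if_splits)
qed

lemma cox_gen_gen_swaps: assumes "gen_swaps i p q" shows "cox_gen i p = q \<and> cox_gen i q = p"
proof -
  consider "i = 0" "p = -1" "q = 1" | "i > 0" "p = int i" "q = int i + 1" | "i > 0" "p = - int i - 1" "q = - int i"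
    using assms unfolding gen_swaps_def by blast
  then show ?thesis by cases (simp_all add: cox_gen_def)
qed

lemma flipped_comp_cox_gen:
  assumes x: "x \<in> signed_perms n" and i: "i < n"
  shows "flipped n (x \<circ> cox_gen i) i = flipped n x i"
proof -
  have x': "x \<circ> cox_gen i \<in> signed_perms n" using x i by (simp add: comp_signed_perm cox_gen_signed_perm)
  show ?thesis
  proof (intro set_eqI)
    fix ab :: "int \<times> int"
    obtain a b where e: "ab = (a, b)" by fastforce
    have "(\<exists>p q. gen_swaps i p q \<and> ((a = (x \<circ> cox_gen i) p \<and> b = (x \<circ> cox_gen i) q) \<or> (a = (x \<circ> cox_gen i) q \<and> b = (x \<circ> cox_gen i) p)))
      \<longleftrightarrow> (\<exists>p q. gen_swaps i p q \<and> ((a = x p \<and> b = x q) \<or> (a = x q \<and> b = x p)))"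
    proof -
      have key: "((a = (x \<circ> cox_gen i) p \<and> b = (x \<circ> cox_gen i) q) \<or> (a = (x \<circ> cox_gen i) q \<and> b = (x \<circ> cox_gen i) p))
          = ((a = x p \<and> b = x q) \<or> (a = x q \<and> b = x p))" if "gen_swaps i p q" for p q
        using cox_gen_gen_swaps[OF that] by auto
      show ?thesis
      proof
        assume "\<exists>p q. gen_swaps i p q \<and> ((a = (x \<circ> cox_gen i) p \<and> b = (x \<circ> cox_gen i) q) \<or> (a = (x \<circ> cox_gen i) q \<and> b = (x \<circ> cox_gen i) p))"
        then obtain p q where "gen_swaps i p q" "((a = (x \<circ> cox_gen i) p \<and> b = (x \<circ> cox_gen i) q) \<or> (a = (x \<circ> cox_gen i) q \<and> b = (x \<circ> cox_gen i) p))"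
          by blast
        then show "\<exists>p q. gen_swaps i p q \<and> ((a = x p \<and> b = x q) \<or> (a = x q \<and> b = x p))" using key by blast
      next
        assume "\<exists>p q. gen_swaps i p q \<and> ((a = x p \<and> b = x q) \<or> (a = x q \<and> b = x p))"
        then obtain p q where "gen_swaps i p q" "((a = x p \<and> b = x q) \<or> (a = x q \<and> b = x p))"
          by blast
        then show "\<exists>p q. gen_swaps i p q \<and> ((a = (x \<circ> cox_gen i) p \<and> b = (x \<circ> cox_gen i) q) \<or> (a = (x \<circ> cox_gen i) q \<and> b = (x \<circ> cox_gen i) p))"
          using key by blast
      qed
    qed
    then show "ab \<in> flipped n (x \<circ> cox_gen i) i \<longleftrightarrow> ab \<in> flipped n x i"
      using mem_flipped_iff[OF x' i, of a b] mem_flipped_iff[OF x i, of a b] e by simp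
  qed
qed

lemma gen_values_comp_cox_gen:
  assumes x: "x \<in> signed_perms n" and i: "i < n"
  shows "gen_values (x \<circ> cox_gen i) i = gen_values x i"
proof (cases "i = 0")
  case True
  have "\<bar>x (- 1)\<bar> = \<bar>x 1\<bar>" using signed_perm_facts0[OF x] i True by simp
  then show ?thesis using True by (simp add: gen_values_def cox_gen_def)
next
  case False
  then show ?thesis by (auto simp: gen_values_def cox_gen_def min_def max_def)
qed

lemma swap_witness_mono:
  assumes w: "swap_witness lab I a b c" and sub: "I \<subseteq> I'" and t: "trans I'" and nac: "(a, c) \<notin> I'"
  shows "swap_witness lab I' a b c"
proof (cases "lab b")
  case True
  then have "(a, b) \<in> I" "(b, c) \<notin> I" using w by (auto simp: swap_witness_def)
  moreover have "(b, c) \<notin> I'"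
  proof
    assume "(b, c) \<in> I'"
    then have "(a, c) \<in> I'" using \<open>(a, b) \<in> I\<close> sub t by (meson subsetD transD)
    then show False using nac by simp
  qed
  ultimately show ?thesis using True sub by (auto simp: swap_witness_def)
next
  case False
  then have "(a, b) \<notin> I" "(b, c) \<in> I" using w by (auto simp: swap_witness_def)
  moreover have "(a, b) \<notin> I'"
  proof
    assume "(a, b) \<in> I'"
    then have "(a, c) \<in> I'" using \<open>(b, c) \<in> I\<close> sub t by (meson subsetD transD)
    then show False using nac by simp
  qed
  ultimately show ?thesis using False sub by (auto simp: swap_witness_def)
qed

lemma swap_witness_inversions:
  assumes x: "x \<in> signed_perms n" and i: "i < n" and e: "gen_values x i = (a, c)"
    and b: "b \<in> pm_set n" "a < b" "b < c"
    and pw: "(lab b \<and> inv x b < gen_lo i) \<or> (\<not> lab b \<and> gen_hi i < inv x b)"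
  shows "swap_witness lab (inversions n x) a b c"
proof -
  have ac: "a \<in> pm_set n" "c \<in> pm_set n" using gen_values_ordered[OF x i e] by auto
  have ss: "gen_lo i < gen_hi i" using gen_lo_hi[OF i] by simp
  have ia: "inv x (x (gen_lo i)) = gen_lo i" "inv x (x (gen_hi i)) = gen_hi i" using signed_perm_inv_apply[OF x] by auto
  have pa: "(inv x a = gen_lo i \<and> inv x c = gen_hi i) \<or> (inv x a = gen_hi i \<and> inv x c = gen_lo i)"
    using gen_values_positions[OF x i e] ia by auto
  show ?thesis using pw pa ss b ac by (auto simp: swap_witness_def inversions_def)
qed

lemma swap_witness_comp_cox_gen:
  assumes x: "x \<in> signed_perms n" and i: "i < n" and e: "gen_values x i = (a, c)"
    and b: "a < b" "b < c"
  shows "swap_witness lab (inversions n (x \<circ> cox_gen i)) a b c \<longleftrightarrow> swap_witness lab (inversions n x) a b c"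
proof -
  have O: "flipped n x i = {(a, c), (- c, - a)}" using flipped_gen_values[OF x i e] .
  have "(a, b) \<notin> flipped n x i" "(b, c) \<notin> flipped n x i" using O b by auto
  then show ?thesis using inversions_comp_cox_gen[OF x i, of a b] inversions_comp_cox_gen[OF x i, of b c] by (auto simp: swap_witness_def)
qed

lemma trancl_inversions: "(inversions n x)\<^sup>+ = inversions n x"
  using trans_inversions by (rule trancl_id)

lemma enclosing_gap:
  assumes S: "S \<subseteq> pm_set n" and ac: "a \<in> pm_set n" "c \<in> pm_set n"
    and gap: "\<And>l. l \<in> S \<Longrightarrow> \<not> (a < l \<and> l < c)"
  obtains i j where "i \<le> a" "c \<le> j" "i \<in> pm_set (Suc n)" "j \<in> pm_set (Suc n)"
    "\<And>l. l \<in> pm_set n \<Longrightarrow> l = i \<or> l = j \<Longrightarrow> l \<in> S" "\<And>l. i < l \<Longrightarrow> l < j \<Longrightarrow> l \<notin> S"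
proof -
  define L where "L = insert (- int n - 1) {l \<in> S. l \<le> a}"
  define R where "R = insert (int n + 1) {l \<in> S. c \<le> l}"
  have fin: "finite L" "finite R" using finite_subset[OF S finite_pm_set] by (auto simp: L_def R_def)
  define i where "i = Max L"
  define j where "j = Min R"
  have iL: "i \<in> L" using Max_in[OF fin(1)] by (simp add: i_def L_def)
  have jR: "j \<in> R" using Min_in[OF fin(2)] by (simp add: j_def R_def)
  have imax: "l \<le> i" if "l \<in> L" for l using Max_ge[OF fin(1) that] by (simp add: i_def)
  have jmin: "j \<le> l" if "l \<in> R" for l using Min_le[OF fin(2) that] by (simp add: j_def)
  show ?thesis
  proof (rule that)
    show "i \<le> a" "i \<in> pm_set (Suc n)" using iL ac S by (auto simp: L_def mem_pm_set_iff)
    show "c \<le> j" "j \<in> pm_set (Suc n)" using jR ac S by (auto simp: R_def mem_pm_set_iff)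
    show "l \<in> S" if "l \<in> pm_set n" "l = i \<or> l = j" for l
      using that iL jR by (auto simp: L_def R_def mem_pm_set_iff)
    show "l \<notin> S" if "i < l" "l < j" for l
    proof
      assume "l \<in> S"
      moreover have "l \<le> a \<or> c \<le> l" using gap[OF \<open>l \<in> S\<close>] by linarith
      ultimately show False using imax[of l] jmin[of l] that by (auto simp: L_def R_def)
    qed
  qed
qed

lemma early_before_late_if_threshold:
  assumes x: "x \<in> signed_perms n"
    and early: "\<And>p. p \<in> early_set n lab i j \<Longrightarrow> inv x p \<le> P"
    and late: "\<And>q. q \<in> late_set n lab i j \<Longrightarrow> P < inv x q"
  shows "early_before_late n lab i j (inversions n x)"
  unfolding early_before_late_def
proof (intro ballI)
  fix p q assume p: "p \<in> early_set n lab i j" and q: "q \<in> late_set n lab i j"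
  have "inv x p < inv x q" using early[OF p] late[OF q] by simp
  moreover have "p \<in> pm_set n" "q \<in> pm_set n" using p q by (auto simp: early_set_def late_set_def)
  ultimately show "placed_before (inversions n x) p q" using placed_before_inversions[OF x] by auto
qed

text \<open>If no value strictly between the adjacent entries \<open>v1\<close>, \<open>v2\<close> of \<open>x\<close> is a swap witness, then some
  diagonal \<open>{i, j}\<close> has \<open>v1\<close> early and \<open>v2\<close> late, and its condition holds for \<open>x\<close>: take \<open>S\<close> to be the
  values that the path has to have passed when it swaps \<open>v1\<close> and \<open>v2\<close>, and \<open>[i, j]\<close> the largest window
  around \<open>v1\<close>, \<open>v2\<close> free of \<open>S\<close>.\<close>

lemma no_witness_imp_early_before_late:
  fixes lab :: "int \<Rightarrow> bool"
  assumes x: "x \<in> signed_perms n" and v: "v1 \<in> pm_set n" "v2 \<in> pm_set n"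
    and pos: "inv x v1 < inv x v2"
    and adj: "\<And>l. l \<in> pm_set n \<Longrightarrow> \<not> (inv x v1 < inv x l \<and> inv x l < inv x v2)"
    and nw: "\<And>b. b \<in> pm_set n \<Longrightarrow> min v1 v2 < b \<Longrightarrow> b < max v1 v2 \<Longrightarrow>
       \<not> ((lab b \<and> inv x b < inv x v1) \<or> (\<not> lab b \<and> inv x v2 < inv x b))"
  shows "\<exists>i j. i < j \<and> i \<in> pm_set (Suc n) \<and> j \<in> pm_set (Suc n) \<and> v1 \<in> early_set n lab i j \<and>
     v2 \<in> late_set n lab i j \<and> early_before_late n lab i j (inversions n x)"
proof -
  define P where "P = inv x v1"
  define a where "a = min v1 v2"
  define c where "c = max v1 v2"
  have injx: "inv x l = inv x m \<Longrightarrow> l = m" for l m by (metis signed_perm_apply_inv[OF x])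
  have "v1 \<noteq> v2" using pos by auto
  then have ac: "a < c" by (auto simp: a_def c_def min_def max_def)
  have aV: "a \<in> pm_set n" "c \<in> pm_set n" using v by (auto simp: a_def c_def min_def max_def)
  define S where "S = {l \<in> pm_set n. (lab l \<and> inv x l \<le> P) \<or> (\<not> lab l \<and> P < inv x l)}"
  have SV: "S \<subseteq> pm_set n" by (auto simp: S_def)
  have gap: "\<not> (a < l \<and> l < c)" if lS: "l \<in> S" for l
  proof
    assume l: "a < l \<and> l < c"
    then have "l \<noteq> v1" "l \<noteq> v2" by (auto simp: a_def c_def)
    then have "inv x l \<noteq> P" "inv x l \<noteq> inv x v2" using injx by (auto simp: P_def)
    moreover have "l \<in> pm_set n" using lS by (simp add: S_def)
    ultimately show False using nw[of l] adj[of l] lS l by (auto simp: S_def P_def a_def c_def)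
  qed
  obtain i j where ia: "i \<le> a" and cj: "c \<le> j" and ijV: "i \<in> pm_set (Suc n)" "j \<in> pm_set (Suc n)"
    and endS: "\<And>l. l \<in> pm_set n \<Longrightarrow> l = i \<or> l = j \<Longrightarrow> l \<in> S"
    and notS: "\<And>l. i < l \<Longrightarrow> l < j \<Longrightarrow> l \<notin> S"
    using enclosing_gap[OF SV aV gap] by blast
  have Dle: "inv x p \<le> P" if p: "p \<in> early_set n lab i j" for p
    using p endS[of p] notS[of p] by (auto simp: early_set_def S_def)
  have Ugt: "P < inv x q" if q: "q \<in> late_set n lab i j" for q
    using q endS[of q] notS[of q] by (auto simp: late_set_def S_def)
  have E: "early_before_late n lab i j (inversions n x)"
    by (rule early_before_late_if_threshold[OF x]) (use Dle Ugt in auto)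
  have rng: "i \<le> v1" "v1 \<le> j" "i \<le> v2" "v2 \<le> j" using ia cj by (auto simp: a_def c_def)
  have "v1 \<in> early_set n lab i j"
    using endS[OF v(1)] notS[of v1] rng v(1) by (cases "v1 = i \<or> v1 = j") (auto simp: early_set_def S_def P_def)
  moreover have "v2 \<in> late_set n lab i j"
    using endS[OF v(2)] notS[of v2] rng v(2) pos
    by (cases "v2 = i \<or> v2 = j") (auto simp: late_set_def S_def P_def)
  moreover have "i < j" using ia cj ac by simp
  ultimately show ?thesis using ijV E by blast
qed

lemma exists_gen_separating:
  assumes x: "x \<in> signed_perms n" and y: "y \<in> signed_perms n" and ne: "x \<noteq> y"
  shows "\<exists>i<n. inv y (x (gen_hi i)) < inv y (x (gen_lo i))"
proof (rule ccontr)
  assume h: "\<not> (\<exists>i<n. inv y (x (gen_hi i)) < inv y (x (gen_lo i)))"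
  define g where "g = inv y \<circ> x"
  have g: "g \<in> signed_perms n" unfolding g_def using inv_signed_perm[OF y] x by (rule comp_signed_perm)
  have "\<not> descent g i" if i: "i < n" for i
  proof (cases "i = 0")
    case True
    have "\<not> inv y (x 1) < inv y (x (-1))" using h i True by (auto simp: gen_lo_def gen_hi_def)
    moreover have "inv y (x (-1)) = - inv y (x 1)" using signed_perm_odd[OF x] signed_perm_odd[OF inv_signed_perm[OF y]] by simp
    ultimately show ?thesis using True by (simp add: descent_def g_def)
  next
    case False
    then show ?thesis using h i by (auto simp: descent_def g_def gen_lo_def gen_hi_def)
  qed
  then have "g = id" using no_descent_imp_id[OF g] by blast
  then have "y \<circ> g = y" by simp
  moreover have "y \<circ> g = x" unfolding g_def by (simp add: fun_eq_iff signed_perm_apply_inv[OF y])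
  ultimately show False using ne by simp
qed

lemma gen_lo_hi_adjacent: "i < n \<Longrightarrow> l \<in> pm_set n \<Longrightarrow> \<not> (gen_lo i < l \<and> l < gen_hi i)"
  by (auto simp: gen_lo_def gen_hi_def mem_pm_set_iff)

lemma card_inversions_diff_comp_cox_gen:
  assumes x: "x \<in> signed_perms n" and y: "y \<in> signed_perms n" and i: "i < n"
    and e: "gen_values x i = (a, c)" and differ: "((a, c) \<in> inversions n x) \<noteq> ((a, c) \<in> inversions n y)"
  shows "card (inversions n (x \<circ> cox_gen i) - inversions n y \<union> (inversions n y - inversions n (x \<circ> cox_gen i)))
    < card (inversions n x - inversions n y \<union> (inversions n y - inversions n x))"
proof -
  define D where "D = inversions n x - inversions n y \<union> (inversions n y - inversions n x)"
  have O: "flipped n x i = {(a, c), (- c, - a)}" using flipped_gen_values[OF x i e] .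
  have differ': "((- c, - a) \<in> inversions n x) \<noteq> ((- c, - a) \<in> inversions n y)"
    using differ inversions_neg_iff[OF x, of a c] inversions_neg_iff[OF y, of a c] by simp
  have "inversions n (x \<circ> cox_gen i) - inversions n y \<union> (inversions n y - inversions n (x \<circ> cox_gen i))
      = D - flipped n x i"
    using inversions_comp_cox_gen[OF x i] O differ differ' by (auto simp: D_def)
  moreover have "D - flipped n x i \<subset> D" using O differ by (auto simp: D_def)
  moreover have "finite D" using finite_inversions by (simp add: D_def)
  ultimately show ?thesis by (simp add: D_def psubset_card_mono)
qed

section \<open>Compatibility with joins and meets\<close>

locale odd_labelling =
  fixes n :: nat and lab :: "int \<Rightarrow> bool"
  assumes lab_neg: "u \<in> pm_set n \<Longrightarrow> lab (- u) \<longleftrightarrow> \<not> lab u"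

locale labelled_diagonals = odd_labelling +
  fixes diag :: "int set \<Rightarrow> bool"
  assumes diag_if_early_late: "i < j \<Longrightarrow> i \<in> pm_set (Suc n) \<Longrightarrow> j \<in> pm_set (Suc n) \<Longrightarrow>
    early_set n lab i j \<noteq> {} \<Longrightarrow> late_set n lab i j \<noteq> {} \<Longrightarrow> diag {i, j}"

context odd_labelling
begin

text \<open>The mirror image \<open>-b\<close> of a swap witness for \<open>(a, c)\<close> is a swap witness for \<open>(-c, -a)\<close>,
  because \<open>lab\<close> is odd.\<close>

lemma early_before_late_insert_neg_pair:
  assumes t: "trans I" and W: "I \<subseteq> ordered_pairs n" and s: "neg_closed I"
    and acV: "a \<in> pm_set n" "c \<in> pm_set n" and ac: "a < c"
    and b: "b \<in> pm_set n" "a < b" "b < c" and w: "swap_witness lab I a b c" and ij: "i \<le> j"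
  shows "early_before_late n lab i j ((I \<union> {(a, c), (- c, - a)})\<^sup>+) \<longleftrightarrow> early_before_late n lab i j I"
proof -
  define I1 where "I1 = (I \<union> {(a, c)})\<^sup>+"
  have sI: "(u, v) \<in> I \<longleftrightarrow> (- v, - u) \<in> I" for u v using s unfolding neg_closed_def by (metis minus_minus)
  have notin_I1: "(u, w) \<notin> I1" if "(- w, - u) \<notin> I" "\<not> (u \<le> a \<and> c \<le> w)" for u w
    using mem_trancl_insert_bounds[OF t W, of u w] that sI[of u w] by (auto simp: I1_def)
  have W1: "I1 \<subseteq> ordered_pairs n"
    unfolding I1_def using W acV ac by (intro trancl_ordered_pairs) (auto simp: ordered_pairs_def)
  have w1: "swap_witness lab I1 (- c) (- b) (- a)"
  proof (cases "lab b")
    case True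
    then have "(a, b) \<in> I" "(b, c) \<notin> I" using w by (auto simp: swap_witness_def)
    then have "(- b, - a) \<in> I1" "(- c, - b) \<notin> I1"
      using sI[of a b] notin_I1[where u = "- c" and w = "- b"] b by (auto simp: I1_def)
    then show ?thesis using lab_neg[OF b(1)] True by (simp add: swap_witness_def)
  next
    case False
    then have "(a, b) \<notin> I" "(b, c) \<in> I" using w by (auto simp: swap_witness_def)
    then have "(- c, - b) \<in> I1" "(- b, - a) \<notin> I1"
      using sI[of b c] notin_I1[where u = "- b" and w = "- a"] b by (auto simp: I1_def)
    then show ?thesis using lab_neg[OF b(1)] False by (simp add: swap_witness_def)
  qed
  have "- b \<in> pm_set n" using b(1) by (auto simp: mem_pm_set_iff)
  then have "early_before_late n lab i j ((I1 \<union> {(- c, - a)})\<^sup>+) \<longleftrightarrow> early_before_late n lab i j I1"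
    using early_before_late_insert[OF _ W1 _ _ _ w1 ij] b by (simp add: I1_def)
  moreover have "(I1 \<union> {(- c, - a)})\<^sup>+ = (I \<union> {(a, c), (- c, - a)})\<^sup>+"
    unfolding I1_def trancl_trancl_Un by (simp add: insert_commute)
  ultimately show ?thesis
    using early_before_late_insert[OF t W b w ij] by (simp add: I1_def)
qed

lemma early_before_late_add_flipped:
  assumes t: "trans I" and W: "I \<subseteq> ordered_pairs n" and s: "neg_closed I"
    and u: "u \<in> signed_perms n" and i: "i < n" and sub: "inversions n u \<subseteq> I"
    and e: "gen_values u i = (a, c)" and b: "b \<in> pm_set n" "a < b" "b < c"
    and w: "swap_witness lab (inversions n u) a b c" and ij: "i' \<le> j'"
  shows "early_before_late n lab i' j' ((I \<union> flipped n u i)\<^sup>+) \<longleftrightarrow> early_before_late n lab i' j' I"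
proof -
  have O: "flipped n u i = {(a, c), (- c, - a)}" using flipped_gen_values[OF u i e] .
  note ac = gen_values_ordered[OF u i e]
  show ?thesis
  proof (cases "(a, c) \<in> I")
    case True
    then have "flipped n u i \<subseteq> I" using O s by (auto simp: neg_closed_def)
    then show ?thesis using trancl_id[OF t] by (simp add: sup.absorb1)
  next
    case False
    then have "swap_witness lab I a b c" using swap_witness_mono[OF w sub t] by blast
    then show ?thesis using early_before_late_insert_neg_pair[OF t W s ac(1-3) b _ ij] O by simp
  qed
qed

lemma early_before_late_join_ascent:
  assumes u: "u \<in> signed_perms n" and z: "z \<in> signed_perms n" and i: "i < n" and nd: "\<not> descent u i"
    and e: "gen_values u i = (a, c)" and b: "b \<in> pm_set n" "a < b" "b < c" and w: "swap_witness lab (inversions n u) a b c"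
    and ij: "i' \<le> j'"
  shows "early_before_late n lab i' j' ((inversions n (u \<circ> cox_gen i) \<union> inversions n z)\<^sup>+) \<longleftrightarrow> early_before_late n lab i' j' ((inversions n u \<union> inversions n z)\<^sup>+)"
proof -
  define I where "I = (inversions n u \<union> inversions n z)\<^sup>+"
  have t: "trans I" by (simp add: I_def)
  have W: "I \<subseteq> ordered_pairs n" unfolding I_def using inversions_ordered by (intro trancl_ordered_pairs) auto
  have s: "neg_closed I" unfolding I_def using neg_closed_inversions[OF u] neg_closed_inversions[OF z] by (intro neg_closed_trancl neg_closed_Un)
  have sub: "inversions n u \<subseteq> I" by (auto simp: I_def)
  have "(inversions n (u \<circ> cox_gen i) \<union> inversions n z)\<^sup>+ = (inversions n u \<union> inversions n z \<union> flipped n u i)\<^sup>+"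
    using inversions_comp_ascent[OF u i nd] by (simp add: Un_ac)
  also have "\<dots> = (I \<union> flipped n u i)\<^sup>+" unfolding I_def by (rule trancl_trancl_Un[symmetric])
  finally have eq: "(inversions n (u \<circ> cox_gen i) \<union> inversions n z)\<^sup>+ = (I \<union> flipped n u i)\<^sup>+" .
  show ?thesis using early_before_late_add_flipped[OF t W s u i sub e b w ij] eq by (simp add: I_def)
qed

lemma early_before_late_join_comp_cox_gen:
  assumes x: "x \<in> signed_perms n" and z: "z \<in> signed_perms n" and i: "i < n"
    and e: "gen_values x i = (a, c)" and b: "b \<in> pm_set n" "a < b" "b < c" and w: "swap_witness lab (inversions n x) a b c"
    and ij: "i' \<le> j'"
  shows "early_before_late n lab i' j' ((inversions n (x \<circ> cox_gen i) \<union> inversions n z)\<^sup>+) \<longleftrightarrow> early_before_late n lab i' j' ((inversions n x \<union> inversions n z)\<^sup>+)"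
proof (cases "descent x i")
  case False
  show ?thesis using early_before_late_join_ascent[OF x z i False e b w ij] .
next
  case True
  define x' where "x' = x \<circ> cox_gen i"
  have x': "x' \<in> signed_perms n" using x i by (simp add: x'_def comp_signed_perm cox_gen_signed_perm)
  have xx: "x' \<circ> cox_gen i = x" by (simp add: x'_def comp_cox_gen_cox_gen)
  have e': "gen_values x' i = (a, c)" using gen_values_comp_cox_gen[OF x i] e by (simp add: x'_def)
  have w': "swap_witness lab (inversions n x') a b c" using swap_witness_comp_cox_gen[OF x i e b(2,3)] w by (simp add: x'_def)
  have O: "flipped n x' i = flipped n x i" using flipped_comp_cox_gen[OF x i] by (simp add: x'_def)
  have nd: "\<not> descent x' i"
  proof
    assume d: "descent x' i"
    have "(a, c) \<in> flipped n x i" using flipped_gen_values[OF x i e] by auto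
    then have "(a, c) \<in> inversions n x'" using flipped_in_inversions_iff[OF x' i] O d by auto
    moreover have "(a, c) \<in> inversions n x" using flipped_in_inversions_iff[OF x i] True \<open>(a, c) \<in> flipped n x i\<close> by auto
    ultimately show False using inversions_comp_cox_gen[OF x i, of a c] \<open>(a, c) \<in> flipped n x i\<close> by (simp add: x'_def)
  qed
  show ?thesis using early_before_late_join_ascent[OF x' z i nd e' b w' ij] xx by (simp add: x'_def)
qed

end

context labelled_diagonals
begin

lemma dual: "labelled_diagonals n (\<lambda>u. \<not> lab u) diag"
proof unfold_locales
  show "(\<not> lab (- u)) \<longleftrightarrow> \<not> \<not> lab u" if "u \<in> pm_set n" for u using lab_neg[OF that] by simp
  show "diag {i, j}" if "i < j" "i \<in> pm_set (Suc n)" "j \<in> pm_set (Suc n)"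
    "early_set n (\<lambda>u. \<not> lab u) i j \<noteq> {}" "late_set n (\<lambda>u. \<not> lab u) i j \<noteq> {}" for i j
    using diag_if_early_late[OF that(1-3)] that(4,5) by (simp add: early_set_neg late_set_neg)
qed

text \<open>Otherwise the diagonal provided by \<open>no_witness_imp_early_before_late\<close> would separate \<open>x\<close>
  from \<open>y\<close>.\<close>

lemma exists_swap_witness:
  assumes x: "x \<in> signed_perms n" and y: "y \<in> signed_perms n" and same: "same_edges n lab diag x y"
    and i: "i < n" and yx: "inv y (x (gen_hi i)) < inv y (x (gen_lo i))"
    and e: "gen_values x i = (a, c)"
  shows "\<exists>b \<in> pm_set n. a < b \<and> b < c \<and> swap_witness lab (inversions n x) a b c"
proof -
  define v1 where "v1 = x (gen_lo i)"
  define v2 where "v2 = x (gen_hi i)"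
  have vV: "v1 \<in> pm_set n" "v2 \<in> pm_set n"
    using gen_lo_hi[OF i] signed_perm_in_iff[OF x] by (auto simp: v1_def v2_def)
  have iv: "inv x v1 = gen_lo i" "inv x v2 = gen_hi i"
    using signed_perm_inv_apply[OF x] by (auto simp: v1_def v2_def)
  have pos: "inv x v1 < inv x v2" using iv gen_lo_hi[OF i] by simp
  have mm: "min v1 v2 = a" "max v1 v2 = c"
    using gen_values_positions[OF x i e] gen_values_ordered(3)[OF x i e] by (auto simp: v1_def v2_def)
  have "\<exists>b \<in> pm_set n. a < b \<and> b < c \<and> ((lab b \<and> inv x b < inv x v1) \<or> (\<not> lab b \<and> inv x v2 < inv x b))"
  proof (rule ccontr)
    assume nw: "\<not> ?thesis"
    have adj: "\<not> (inv x v1 < inv x l \<and> inv x l < inv x v2)" if "l \<in> pm_set n" for l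
      using gen_lo_hi_adjacent[OF i, of "inv x l"] iv signed_perm_in_iff[OF inv_signed_perm[OF x]] that
      by simp
    obtain i1 j1 where ij: "i1 < j1" "i1 \<in> pm_set (Suc n)" "j1 \<in> pm_set (Suc n)"
      "v1 \<in> early_set n lab i1 j1" "v2 \<in> late_set n lab i1 j1" "early_before_late n lab i1 j1 (inversions n x)"
      using no_witness_imp_early_before_late[OF x vV pos adj, of lab] nw mm by blast
    have "diag {i1, j1}" using diag_if_early_late[OF ij(1-3)] ij(4,5) by blast
    then have "early_before_late n lab i1 j1 (inversions n y)" using same ij by (auto simp: same_edges_def)
    then have "placed_before (inversions n y) v1 v2" using ij(4,5) by (auto simp: early_before_late_def)
    moreover have "v1 \<noteq> v2" using pos by auto
    ultimately have "inv y v1 < inv y v2" using placed_before_inversions[OF y vV] by simp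
    then show False using yx by (simp add: v1_def v2_def)
  qed
  then obtain b where b: "b \<in> pm_set n" "a < b" "b < c"
    "(lab b \<and> inv x b < gen_lo i) \<or> (\<not> lab b \<and> gen_hi i < inv x b)"
    unfolding iv by blast
  then show ?thesis using swap_witness_inversions[where lab = lab, OF x i e b(1-3)] by blast
qed

lemma same_edges_join_aux:
  assumes z: "z \<in> signed_perms n" and y: "y \<in> signed_perms n"
  shows "x \<in> signed_perms n \<Longrightarrow> same_edges n lab diag x y \<Longrightarrow>
    card (inversions n x - inversions n y \<union> (inversions n y - inversions n x)) = k \<Longrightarrow> i' \<le> j' \<Longrightarrow>
    early_before_late n lab i' j' ((inversions n x \<union> inversions n z)\<^sup>+) \<longleftrightarrow>
    early_before_late n lab i' j' ((inversions n y \<union> inversions n z)\<^sup>+)"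
proof (induction k arbitrary: x rule: less_induct)
  case (less k)
  note x = less.prems(1) and same = less.prems(2)
  show ?case
  proof (cases "x = y")
    case False
    obtain i where i: "i < n" "inv y (x (gen_hi i)) < inv y (x (gen_lo i))"
      using exists_gen_separating[OF x y False] by blast
    obtain a c where e: "gen_values x i = (a, c)" by fastforce
    obtain b where b: "b \<in> pm_set n" "a < b" "b < c" and w: "swap_witness lab (inversions n x) a b c"
      using exists_swap_witness[OF x y same i e] by blast
    define x' where "x' = x \<circ> cox_gen i"
    have x': "x' \<in> signed_perms n" using x i by (simp add: x'_def comp_signed_perm cox_gen_signed_perm)
    have join_x': "early_before_late n lab i1 j1 ((inversions n x' \<union> inversions n u)\<^sup>+) \<longleftrightarrow>
        early_before_late n lab i1 j1 ((inversions n x \<union> inversions n u)\<^sup>+)"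
      if "u \<in> signed_perms n" "i1 \<le> j1" for i1 j1 u
      using early_before_late_join_comp_cox_gen[OF x that(1) i(1) e b w that(2)] by (simp add: x'_def)
    have "same_edges n lab diag x' y"
      using same join_x'[OF id_signed_perm] by (auto simp: same_edges_def inversions_id trancl_inversions)
    moreover have "((a, c) \<in> inversions n x) \<noteq> ((a, c) \<in> inversions n y)"
    proof -
      have "(a = x (gen_lo i) \<and> c = x (gen_hi i)) \<or> (a = x (gen_hi i) \<and> c = x (gen_lo i))"
        using gen_values_positions[OF x i(1) e] .
      moreover have "a \<in> pm_set n" "c \<in> pm_set n" "a < c" using gen_values_ordered[OF x i(1) e] by auto
      moreover have "gen_lo i < gen_hi i" using gen_lo_hi[OF i(1)] by simp
      ultimately show ?thesis using i(2) signed_perm_inv_apply[OF x]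
        by (auto simp: inversions_def)
    qed
    then have "card (inversions n x' - inversions n y \<union> (inversions n y - inversions n x')) < k"
      using card_inversions_diff_comp_cox_gen[OF x y i(1) e] less.prems(3) by (simp add: x'_def)
    ultimately show ?thesis
      using less.IH[OF _ x' _ refl less.prems(4)] join_x'[OF z less.prems(4)] by simp
  qed simp
qed

lemma same_edges_join:
  assumes x: "x \<in> signed_perms n" and y: "y \<in> signed_perms n" and z: "z \<in> signed_perms n"
    and same: "same_edges n lab diag x y"
    and jx: "is_join (signed_perms n) (weak_le n) x z m1"
    and jy: "is_join (signed_perms n) (weak_le n) y z m2"
  shows "same_edges n lab diag m1 m2"
proof -
  have "inversions n m1 = (inversions n x \<union> inversions n z)\<^sup>+" using inversions_join[OF x z jx] .
  moreover have "inversions n m2 = (inversions n y \<union> inversions n z)\<^sup>+" using inversions_join[OF y z jy] .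
  ultimately show ?thesis
    using same_edges_join_aux[OF z y x same refl] unfolding same_edges_def by auto
qed

lemma same_edges_meet:
  assumes x: "x \<in> signed_perms n" and y: "y \<in> signed_perms n" and z: "z \<in> signed_perms n"
    and same: "same_edges n lab diag x y"
    and mx: "is_meet (signed_perms n) (weak_le n) x z m1"
    and my: "is_meet (signed_perms n) (weak_le n) y z m2"
  shows "same_edges n lab diag m1 m2"
proof -
  interpret dual: labelled_diagonals n "\<lambda>u. \<not> lab u" diag by (rule dual)
  have m: "m1 \<in> signed_perms n" "m2 \<in> signed_perms n" using mx my by (auto simp: is_meet_def)
  have "same_edges n (\<lambda>u. \<not> lab u) diag (mul_longest n x) (mul_longest n y)"
    using same_edges_mul_longest[OF x y] same by simp
  then have "same_edges n (\<lambda>u. \<not> lab u) diag (mul_longest n m1) (mul_longest n m2)"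
    by (rule dual.same_edges_join[OF mul_longest_signed_perm[OF x] mul_longest_signed_perm[OF y]
        mul_longest_signed_perm[OF z] _ is_join_mul_longest[OF x z mx] is_join_mul_longest[OF y z my]])
  then show ?thesis using same_edges_mul_longest[OF m] by simp
qed

theorem same_edges_lattice_congruence:
  "lattice_congruence (signed_perms n) (weak_le n)
     {(x, y). x \<in> signed_perms n \<and> y \<in> signed_perms n \<and> same_edges n lab diag x y}"
proof -
  have "equiv (signed_perms n) {(x, y). x \<in> signed_perms n \<and> y \<in> signed_perms n \<and> same_edges n lab diag x y}"
    by (auto simp: equiv_def refl_on_def sym_def trans_def same_edges_def)
  moreover have "same_edges n lab diag m1 m2 \<and> m1 \<in> signed_perms n \<and> m2 \<in> signed_perms n"
    if "x \<in> signed_perms n" "y \<in> signed_perms n" "z \<in> signed_perms n" "same_edges n lab diag x y"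
      "is_meet (signed_perms n) (weak_le n) x z m1" "is_meet (signed_perms n) (weak_le n) y z m2" for x y z m1 m2
    using same_edges_meet[OF that] that(5,6) by (simp add: is_meet_def)
  moreover have "same_edges n lab diag m1 m2 \<and> m1 \<in> signed_perms n \<and> m2 \<in> signed_perms n"
    if "x \<in> signed_perms n" "y \<in> signed_perms n" "z \<in> signed_perms n" "same_edges n lab diag x y"
      "is_join (signed_perms n) (weak_le n) x z m1" "is_join (signed_perms n) (weak_le n) y z m2" for x y z m1 m2
    using same_edges_join[OF that] that(5,6) by (simp add: is_join_def)
  ultimately show ?thesis unfolding lattice_congruence_def by blast
qed

end

section \<open>Geometry of the polygon\<close>

lemma cross3_swap: "cross3 a c b = - cross3 a b c"
  by (simp add: cross3_def algebra_simps)

lemma cross3_rotate: "cross3 a b c = cross3 c a b"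
  by (simp add: cross3_def algebra_simps)

lemma closed_segment_point_at_fst:
  fixes a b :: "real \<times> real"
  assumes "fst a < fst b" "fst a \<le> t" "t \<le> fst b"
  obtains q where "q \<in> closed_segment a b" "fst q = t"
proof
  define u where "u = (t - fst a) / (fst b - fst a)"
  have u: "0 \<le> u" "u \<le> 1" using assms by (auto simp: u_def divide_simps)
  then show "(1 - u) *\<^sub>R a + u *\<^sub>R b \<in> closed_segment a b" by (auto simp: in_segment)
  have "u * (fst b - fst a) = t - fst a" using assms(1) by (simp add: u_def)
  then show "fst ((1 - u) *\<^sub>R a + u *\<^sub>R b) = t" by (simp add: algebra_simps)
qed

lemma cross3_eq_vertical_offset:
  fixes a b p q :: "real \<times> real"
  assumes "q \<in> closed_segment a b" "fst p = fst q"
  shows "cross3 a b p = (fst b - fst a) * (snd p - snd q)"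
proof -
  obtain u where q: "q = (1 - u) *\<^sub>R a + u *\<^sub>R b" using assms(1) by (auto simp: in_segment)
  have fq: "fst q = fst a + u * (fst b - fst a)" and sq: "snd q = snd a + u * (snd b - snd a)"
    unfolding q by (simp_all add: algebra_simps)
  show ?thesis unfolding cross3_def assms(2) fq sq by (simp add: algebra_simps)
qed

lemma vertical_closed_segment:
  fixes p r s :: "real \<times> real"
  assumes "fst p = fst r" "fst p = fst s" "snd r \<le> snd p" "snd p \<le> snd s"
  shows "p \<in> closed_segment r s"
proof (cases "snd r = snd s")
  case True
  then have "p = r" using assms by (simp add: prod_eq_iff)
  then show ?thesis by simp
next
  case False
  define u where "u = (snd p - snd r) / (snd s - snd r)"
  have u: "0 \<le> u" "u \<le> 1" using assms False by (auto simp: u_def divide_simps)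
  have "u * (snd s - snd r) = snd p - snd r" using False by (simp add: u_def)
  then have "p = (1 - u) *\<^sub>R r + u *\<^sub>R s" using assms by (simp add: prod_eq_iff algebra_simps)
  then show ?thesis using u by (auto simp: in_segment)
qed

context
  fixes n :: nat and v :: "int \<Rightarrow> real \<times> real"
  assumes Q: "sym_polygon n v"
begin

lemma ends_in_pm_set: "- int n - 1 \<in> pm_set (Suc n)" "int n + 1 \<in> pm_set (Suc n)"
  by (auto simp: mem_pm_set_iff)

lemma polygon_neg: "i \<in> pm_set (Suc n) \<Longrightarrow> v (- i) = - v i"
  using Q by (simp add: sym_polygon_def)

lemma polygon_fst_less: "i \<in> pm_set (Suc n) \<Longrightarrow> j \<in> pm_set (Suc n) \<Longrightarrow> i < j \<Longrightarrow> fst (v i) < fst (v j)"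
  using Q by (simp add: sym_polygon_def)

lemma polygon_ends_on_axis: "snd (v (int n + 1)) = 0" "snd (v (- int n - 1)) = 0"
proof -
  show "snd (v (int n + 1)) = 0" using Q by (simp add: sym_polygon_def)
  moreover have "v (- (int n + 1)) = - v (int n + 1)" using polygon_neg ends_in_pm_set(2) by blast
  ultimately show "snd (v (- int n - 1)) = 0" by simp
qed

lemma polygon_vertex_not_in_hull:
  "i \<in> pm_set (Suc n) \<Longrightarrow> v i \<notin> convex hull (v ` (pm_set (Suc n) - {i}))"
  using Q by (simp add: sym_polygon_def)

lemma fst_inner_vertex:
  assumes "l \<in> pm_set n"
  shows "fst (v (- int n - 1)) < fst (v l)" "fst (v l) < fst (v (int n + 1))"
  using polygon_fst_less[of "- int n - 1" l] polygon_fst_less[of l "int n + 1"] assms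
  by (auto simp: mem_pm_set_iff)

lemma axis_point_below_vertex:
  assumes "l \<in> pm_set n"
  obtains r where "r \<in> closed_segment (v (- int n - 1)) (v (int n + 1))" "fst r = fst (v l)" "snd r = 0"
proof -
  note between = fst_inner_vertex[OF assms]
  obtain r where r: "r \<in> closed_segment (v (- int n - 1)) (v (int n + 1))" "fst r = fst (v l)"
    by (rule closed_segment_point_at_fst[OF less_trans[OF between] less_imp_le[OF between(1)]
          less_imp_le[OF between(2)]])
  obtain u where "r = (1 - u) *\<^sub>R v (- int n - 1) + u *\<^sub>R v (int n + 1)"
    using r(1) by (auto simp: in_segment)
  then have "snd r = 0" using polygon_ends_on_axis by simp
  then show ?thesis using that r by blast
qed

text \<open>The only use of convexity: a vertex \<open>v l\<close> cannot lie on a segment joining a point of the chord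
  \<open>[v i, v j]\<close> to a point of the axis chord \<open>[v (-n-1), v (n+1)]\<close>, since that segment lies in the
  convex hull of four other vertices.\<close>

lemma vertex_not_on_segment:
  assumes l: "l \<in> pm_set n" and ij: "i \<in> pm_set (Suc n)" "j \<in> pm_set (Suc n)" "i \<noteq> l" "j \<noteq> l"
    and q: "q \<in> closed_segment (v i) (v j)"
    and r: "r \<in> closed_segment (v (- int n - 1)) (v (int n + 1))"
  shows "v l \<notin> closed_segment q r"
proof -
  define K where "K = {i, j, - int n - 1, int n + 1}"
  have K: "K \<subseteq> pm_set (Suc n) - {l}" using ij l by (auto simp: K_def mem_pm_set_iff)
  have "closed_segment (v i) (v j) \<subseteq> convex hull (v ` K)"
    "closed_segment (v (- int n - 1)) (v (int n + 1)) \<subseteq> convex hull (v ` K)"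
    by (simp_all add: closed_segment_subset hull_inc K_def)
  then have "q \<in> convex hull (v ` K)" "r \<in> convex hull (v ` K)" using q r by auto
  then have "closed_segment q r \<subseteq> convex hull (v ` K)" by (simp add: closed_segment_subset)
  also have "\<dots> \<subseteq> convex hull (v ` (pm_set (Suc n) - {l}))" by (rule hull_mono) (use K in auto)
  finally show ?thesis
    using polygon_vertex_not_in_hull[of l] l by (auto simp: mem_pm_set_iff)
qed

lemma inner_vertex_off_axis:
  assumes l: "l \<in> pm_set n"
  shows "snd (v l) \<noteq> 0"
proof
  assume "snd (v l) = 0"
  obtain r where r: "r \<in> closed_segment (v (- int n - 1)) (v (int n + 1))" "fst r = fst (v l)" "snd r = 0"
    using axis_point_below_vertex[OF l] .
  have "v l = r" using r \<open>snd (v l) = 0\<close> by (simp add: prod_eq_iff)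
  moreover have "v l \<notin> closed_segment (v (- int n - 1)) r"
    by (rule vertex_not_on_segment[OF l ends_in_pm_set(1) ends_in_pm_set(1) _ _ _ r(1)])
      (use l in \<open>auto simp: mem_pm_set_iff\<close>)
  ultimately show False by simp
qed

lemma is_up_neg:
  assumes u: "u \<in> pm_set n"
  shows "is_up v (- u) \<longleftrightarrow> \<not> is_up v u"
proof -
  have "v (- u) = - v u" using polygon_neg u by (simp add: mem_pm_set_iff)
  then show ?thesis using inner_vertex_off_axis[OF u] by (auto simp: is_up_def)
qed

lemma cross3_sign_inner_vertex:
  assumes ij: "i \<in> pm_set (Suc n)" "j \<in> pm_set (Suc n)" and l: "l \<in> pm_set n" "i < l" "l < j"
  shows "is_up v l \<Longrightarrow> cross3 (v i) (v j) (v l) > 0" "\<not> is_up v l \<Longrightarrow> cross3 (v i) (v j) (v l) < 0"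
proof -
  have lR: "l \<in> pm_set (Suc n)" using l by (auto simp: mem_pm_set_iff)
  have fst_ij: "fst (v i) < fst (v l)" "fst (v l) < fst (v j)"
    using polygon_fst_less[OF ij(1) lR] polygon_fst_less[OF lR ij(2)] l by auto
  obtain q where q: "q \<in> closed_segment (v i) (v j)" "fst q = fst (v l)"
    using closed_segment_point_at_fst[of "v i" "v j" "fst (v l)"] fst_ij by auto
  obtain r where r: "r \<in> closed_segment (v (- int n - 1)) (v (int n + 1))" "fst r = fst (v l)" "snd r = 0"
    using axis_point_below_vertex[OF l(1)] .
  have cross: "cross3 (v i) (v j) (v l) = (fst (v j) - fst (v i)) * (snd (v l) - snd q)"
    using cross3_eq_vertical_offset[OF q(1)] q(2) by simp
  have off: "v l \<notin> closed_segment q r"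
    by (rule vertex_not_on_segment[OF l(1) ij _ _ q(1) r(1)]) (use l in simp_all)
  show "cross3 (v i) (v j) (v l) > 0" if "is_up v l"
  proof -
    have "v l \<in> closed_segment r q" if "snd (v l) \<le> snd q"
      by (rule vertical_closed_segment) (use q r \<open>is_up v l\<close> that in \<open>simp_all add: is_up_def\<close>)
    then have "snd q < snd (v l)" using off[unfolded closed_segment_commute[of q r]] by fastforce
    then show ?thesis using cross fst_ij by simp
  qed
  show "cross3 (v i) (v j) (v l) < 0" if "\<not> is_up v l"
  proof -
    have down: "snd (v l) < 0" using that inner_vertex_off_axis[OF l(1)] by (auto simp: is_up_def)
    have "v l \<in> closed_segment q r" if "snd q \<le> snd (v l)"
      by (rule vertical_closed_segment) (use q r down that in simp_all)
    then have "snd (v l) < snd q" using off by fastforce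
    then show ?thesis using cross fst_ij by (simp add: mult_pos_neg)
  qed
qed

lemma vertex_below_chord_if_early:
  assumes ij: "i < j" "i \<in> pm_set (Suc n)" "j \<in> pm_set (Suc n)" and p: "p \<in> early_set n (is_up v) i j"
  shows "\<exists>k \<in> pm_set (Suc n) - {i, j}. cross3 (v i) (v j) (v k) < 0"
proof -
  have pV: "p \<in> pm_set n" using p by (simp add: early_set_def)
  note sign = cross3_sign_inner_vertex[OF _ _ pV]
  from p consider "i < p" "p < j" "\<not> is_up v p" | "p = i" "is_up v p" | "p = j" "is_up v p"
    by (auto simp: early_set_def)
  then show ?thesis
  proof cases
    case 1
    then show ?thesis using sign(2)[OF ij(2,3)] pV by (force simp: mem_pm_set_iff)
  next
    case 2
    then have "cross3 (v (- int n - 1)) (v j) (v i) > 0"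
      using sign(1)[OF ends_in_pm_set(1) ij(3)] pV ij(1) by (simp add: mem_pm_set_iff)
    then have "cross3 (v i) (v j) (v (- int n - 1)) < 0"
      by (metis cross3_rotate cross3_swap neg_less_0_iff_less)
    then show ?thesis using ends_in_pm_set(1) 2 pV ij(1) by (force simp: mem_pm_set_iff)
  next
    case 3
    then have "cross3 (v i) (v (int n + 1)) (v j) > 0"
      using sign(1)[OF ij(2) ends_in_pm_set(2)] pV ij(1) by (simp add: mem_pm_set_iff)
    then have "cross3 (v i) (v j) (v (int n + 1)) < 0" by (metis cross3_swap neg_less_0_iff_less)
    then show ?thesis using ends_in_pm_set(2) 3 pV ij(1) by (force simp: mem_pm_set_iff)
  qed
qed

lemma vertex_above_chord_if_late:
  assumes ij: "i < j" "i \<in> pm_set (Suc n)" "j \<in> pm_set (Suc n)" and q: "q \<in> late_set n (is_up v) i j"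
  shows "\<exists>k \<in> pm_set (Suc n) - {i, j}. cross3 (v i) (v j) (v k) > 0"
proof -
  have qV: "q \<in> pm_set n" using q by (simp add: late_set_def)
  note sign = cross3_sign_inner_vertex[OF _ _ qV]
  from q consider "i < q" "q < j" "is_up v q" | "q = i" "\<not> is_up v q" | "q = j" "\<not> is_up v q"
    by (auto simp: late_set_def)
  then show ?thesis
  proof cases
    case 1
    then show ?thesis using sign(1)[OF ij(2,3)] qV by (force simp: mem_pm_set_iff)
  next
    case 2
    then have "cross3 (v (- int n - 1)) (v j) (v i) < 0"
      using sign(2)[OF ends_in_pm_set(1) ij(3)] qV ij(1) by (simp add: mem_pm_set_iff)
    then have "cross3 (v i) (v j) (v (- int n - 1)) > 0"
      by (metis cross3_rotate cross3_swap neg_0_less_iff_less)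
    then show ?thesis using ends_in_pm_set(1) 2 qV ij(1) by (force simp: mem_pm_set_iff)
  next
    case 3
    then have "cross3 (v i) (v (int n + 1)) (v j) < 0"
      using sign(2)[OF ij(2) ends_in_pm_set(2)] qV ij(1) by (simp add: mem_pm_set_iff)
    then have "cross3 (v i) (v j) (v (int n + 1)) > 0" by (metis cross3_swap neg_0_less_iff_less)
    then show ?thesis using ends_in_pm_set(2) 3 qV ij(1) by (force simp: mem_pm_set_iff)
  qed
qed

lemma diagonal_if_early_late:
  assumes ij: "i < j" "i \<in> pm_set (Suc n)" "j \<in> pm_set (Suc n)"
    and early: "early_set n (is_up v) i j \<noteq> {}" and late: "late_set n (is_up v) i j \<noteq> {}"
  shows "is_diagonal n v {i, j}"
proof -
  obtain k1 where k1: "k1 \<in> pm_set (Suc n) - {i, j}" "cross3 (v i) (v j) (v k1) < 0"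
    using vertex_below_chord_if_early[OF ij] early by blast
  obtain k2 where k2: "k2 \<in> pm_set (Suc n) - {i, j}" "cross3 (v i) (v j) (v k2) > 0"
    using vertex_above_chord_if_late[OF ij] late by blast
  have "\<not> poly_edge n v i j" using k1 k2 by (force simp: poly_edge_def)
  then show ?thesis using ij unfolding is_diagonal_def by force
qed

end

theorem theorem7p1:
  fixes n :: nat and v :: "int \<Rightarrow> real \<times> real"
  assumes "sym_polygon n v"
  shows "lattice_congruence (signed_perms n) (weak_le n)
           {(x, y). x \<in> signed_perms n \<and> y \<in> signed_perms n \<and> etaB n v x = etaB n v y}"
proof -
  interpret labelled_diagonals n "is_up v" "is_diagonal n v"
  proof unfold_locales
    show "is_up v (- u) \<longleftrightarrow> \<not> is_up v u" if "u \<in> pm_set n" for u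
      using is_up_neg[OF assms that] .
    show "is_diagonal n v {i, j}" if "i < j" "i \<in> pm_set (Suc n)" "j \<in> pm_set (Suc n)"
      "early_set n (is_up v) i j \<noteq> {}" "late_set n (is_up v) i j \<noteq> {}" for i j
      using diagonal_if_early_late[OF assms that] .
  qed
  have "{(x, y). x \<in> signed_perms n \<and> y \<in> signed_perms n \<and> etaB n v x = etaB n v y} =
     {(x, y). x \<in> signed_perms n \<and> y \<in> signed_perms n \<and> same_edges n (is_up v) (is_diagonal n v) x y}"
    using etaB_eq_iff_same_edges by blast
  then show ?thesis using same_edges_lattice_congruence by simp
qed

end
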